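(* Let $q(t)=(r(t)R(\theta(t))a_1,r(t)R(\theta(t))a_2,r(t)R(\theta(t))a_3)$ be an elliptic relative equilibrium of the charged planar three-body system $m_i\ddot q_i=\sum_{j\ne i}\frac{m_im_j-e_ie_j}{|q_i-q_j|^3}(q_j-q_i)$, $i=1,2,3$, with $\delta_{ij}>0$ for $1\le i<j\le 3$, where $(a_1,a_2,a_3)$ is a non-collinear central configuration of the same charged three-body problem. Then the linearized system of this charged three-body system at $q$ can be transformed to the linearized system of the classical (Newtonian, uncharged) three-body problem at the elliptic equilateral triangle (Lagrangian) solution with the same eccentricity $e\in[0,1)$ and the same $\beta\in[0,9]$, where $\beta=\frac{36(m_1m_2\sin^2\theta_3+m_1m_3\sin^2\theta_2+m_2m_3\sin^2\theta_1)}{(m_1+m_2+m_3)^2}$.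
   Context: Charged planar three-body problem: point particles with masses $m_j>0$ and charges $e_j\in\mathbb{R}$, positions $q_j\in\mathbb{R}^2$, potential $U(q)=\sum_{i<j}\frac{m_im_j-e_ie_j}{|q_i-q_j|}$. Set $\delta_{ij}=1-\frac{e_i}{m_i}\frac{e_j}{m_j}$. $R(\theta)$ is the rotation matrix by angle $\theta$; $z(t)=r(t)(\cos\theta(t),\sin\theta(t))^T$ is a Keplerian orbit with eccentricity $e\in[0,1)$. $\theta_1,\theta_2,\theta_3$ are the inner angles of the triangle formed by the central configuration. *)

theory Defs
  imports "HOL-Analysis.Analysis"
begin

type_synonym conf = "real^2^3"

definition rot :: "real \<Rightarrow> real^2 \<Rightarrow> real^2" where
  "rot th x = vector [cos th * x$1 - sin th * x$2, sin th * x$1 + cos th * x$2]"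

text \<open>Acceleration field of the charged three-body problem:
  q_i'' = (1/m_i) sum_{j \<noteq> i} (m_i m_j - e_i e_j)/|q_i - q_j|^3 (q_j - q_i).
  Charges all zero gives the classical Newtonian problem.\<close>
definition force :: "real^3 \<Rightarrow> real^3 \<Rightarrow> conf \<Rightarrow> conf" where
  "force m e x = (\<chi> i. (1 / m$i) *\<^sub>R
      (\<Sum>j\<in>UNIV - {i}. ((m$i * m$j - e$i * e$j) / norm (x$j - x$i) ^ 3) *\<^sub>R (x$j - x$i)))"

definition delta :: "real^3 \<Rightarrow> real^3 \<Rightarrow> 3 \<Rightarrow> 3 \<Rightarrow> real" where
  "delta m e i j = 1 - (e$i / m$i) * (e$j / m$j)"

definition is_solution :: "real^3 \<Rightarrow> real^3 \<Rightarrow> (real \<Rightarrow> conf) \<Rightarrow> bool" where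
  "is_solution m e q \<longleftrightarrow> (\<exists>v. \<forall>t. (q has_vector_derivative v t) (at t) \<and>
       (v has_vector_derivative force m e (q t)) (at t))"

definition center_of_mass :: "real^3 \<Rightarrow> conf \<Rightarrow> real^2" where
  "center_of_mass m a = (1 / (\<Sum>i\<in>UNIV. m$i)) *\<^sub>R (\<Sum>i\<in>UNIV. m$i *\<^sub>R a$i)"

definition central_config :: "real^3 \<Rightarrow> real^3 \<Rightarrow> conf \<Rightarrow> bool" where
  "central_config m e a \<longleftrightarrow> (\<forall>i j. i \<noteq> j \<longrightarrow> a$i \<noteq> a$j) \<and>
     (\<exists>lam. \<forall>i. force m e a $ i = (- lam) *\<^sub>R (a$i - center_of_mass m a))"

text \<open>Keplerian orbit z'' = - mu z / |z|^3 (mu > 0) with eccentricity ecc, the latter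
  given by the length of the Laplace--Runge--Lenz vector divided by mu.\<close>
definition kepler_orbit :: "(real \<Rightarrow> real^2) \<Rightarrow> real \<Rightarrow> bool" where
  "kepler_orbit z ecc \<longleftrightarrow> (\<exists>mu v. mu > 0 \<and> (\<forall>t. z t \<noteq> 0 \<and>
      (z has_vector_derivative v t) (at t) \<and>
      (v has_vector_derivative (- (mu / norm (z t) ^ 3)) *\<^sub>R z t) (at t) \<and>
      (let L = (z t)$1 * (v t)$2 - (z t)$2 * (v t)$1;
           A = vector [(v t)$2 * L - mu * (z t)$1 / norm (z t),
                       - (v t)$1 * L - mu * (z t)$2 / norm (z t)] :: real^2
       in ecc = norm A / mu)))"

definition inner_angle :: "conf \<Rightarrow> 3 \<Rightarrow> 3 \<Rightarrow> 3 \<Rightarrow> real" where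
  "inner_angle a i j k = arccos (((a$j - a$i) \<bullet> (a$k - a$i)) / (norm (a$j - a$i) * norm (a$k - a$i)))"

definition beta :: "real^3 \<Rightarrow> conf \<Rightarrow> real" where
  "beta m a = 36 * (m$1 * m$2 * (sin (inner_angle a 3 1 2))^2
                  + m$1 * m$3 * (sin (inner_angle a 2 1 3))^2
                  + m$2 * m$3 * (sin (inner_angle a 1 2 3))^2) / (m$1 + m$2 + m$3)^2"

text \<open>Solutions Y = (xi, xi') of the first-order linearized system of q'' = F(q) along q:
  xi' = eta, eta' = DF(q(t)) xi.\<close>
definition lin_solution :: "real^3 \<Rightarrow> real^3 \<Rightarrow> (real \<Rightarrow> conf) \<Rightarrow> (real \<Rightarrow> conf \<times> conf) \<Rightarrow> bool" where
  "lin_solution m e q Y \<longleftrightarrow> (\<forall>t. (Y has_vector_derivative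
      (snd (Y t), frechet_derivative (force m e) (at (q t)) (fst (Y t)))) (at t))"

definition equilateral :: "conf \<Rightarrow> bool" where
  "equilateral a \<longleftrightarrow> norm (a$1 - a$2) > 0 \<and> norm (a$1 - a$2) = norm (a$2 - a$3)
     \<and> norm (a$2 - a$3) = norm (a$3 - a$1)"

end

theory Submission
  imports Defs
begin

text \<open>In complex coordinates the relative equilibrium is $q = z A$ with $z = r e^{i\theta}$. Because $A$
  is a non-collinear central configuration, $m_i m_j - e_i e_j = \kappa m_i m_j |A_i - A_j|^3$ for a
  single $\kappa > 0$, so along $q$ the charged force field and its derivative are those of a Newtonian
  problem. The linearised Newtonian field at a triangle preserves the lines of translations, of multiples
  of the centred configuration and of multiples of the side mode, which span $\mathbb{C}^3$; on them it
  depends on masses and shape only through the total mass $M$ and, on the side mode, a twist constant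
  $s$, while $\beta = 9 (1 - |s|^2/M^2)$. Suitable masses on an
  equilateral triangle give the same total mass $M$ and the same $|s|$; multiplying the side coordinate
  by a $\tau$ with $\tau s = \bar\tau s'$ then conjugates the two linearised systems by a constant map.\<close>

section \<open>Complex coordinates\<close>

type_synonym cconf = "3 \<Rightarrow> complex"

definition complex_of_vec :: "real^2 \<Rightarrow> complex" where
  "complex_of_vec x = Complex (x$1) (x$2)"

definition vec_of_complex :: "complex \<Rightarrow> real^2" where
  "vec_of_complex z = vector [Re z, Im z]"

lemma vec_of_complex_of_vec [simp]: "vec_of_complex (complex_of_vec x) = x"
  unfolding vec_of_complex_def complex_of_vec_def by (simp add: vec_eq_iff forall_2)

lemma complex_of_vec_of_complex [simp]: "complex_of_vec (vec_of_complex z) = z"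
  unfolding vec_of_complex_def complex_of_vec_def by (simp add: complex_eq_iff)

lemma complex_of_vec_inject: "complex_of_vec x = complex_of_vec y \<longleftrightarrow> x = y"
  by (metis vec_of_complex_of_vec)

lemma complex_of_vec_add: "complex_of_vec (x + y) = complex_of_vec x + complex_of_vec y"
  and complex_of_vec_diff: "complex_of_vec (x - y) = complex_of_vec x - complex_of_vec y"
  and complex_of_vec_minus: "complex_of_vec (- x) = - complex_of_vec x"
  and complex_of_vec_scaleR: "complex_of_vec (c *\<^sub>R x) = of_real c * complex_of_vec x"
  and complex_of_vec_zero: "complex_of_vec 0 = 0"
  unfolding complex_of_vec_def by (simp_all add: complex_eq_iff)

lemma complex_of_vec_sum: "complex_of_vec (sum f A) = (\<Sum>x\<in>A. complex_of_vec (f x))"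
  by (induction A rule: infinite_finite_induct) (auto simp: complex_of_vec_zero complex_of_vec_add)

lemma norm_complex_of_vec: "cmod (complex_of_vec x) = norm x"
  unfolding complex_of_vec_def cmod_def norm_vec_def L2_set_def sum_2 by (simp add: power2_eq_square)

lemma inner_complex_of_vec: "x \<bullet> y = Re (cnj (complex_of_vec x) * complex_of_vec y)"
  unfolding complex_of_vec_def inner_vec_def sum_2 by simp

lemma complex_of_vec_rot: "complex_of_vec (rot th x) = cis th * complex_of_vec x"
  unfolding complex_of_vec_def rot_def by (simp add: complex_eq_iff)

definition to_cconf :: "conf \<Rightarrow> cconf" where
  "to_cconf x i = complex_of_vec (x$i)"

definition of_cconf :: "cconf \<Rightarrow> conf" where
  "of_cconf H = (\<chi> i. vec_of_complex (H i))"

lemma of_cconf_nth [simp]: "of_cconf H $ i = vec_of_complex (H i)"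
  unfolding of_cconf_def by simp

lemma of_cconf_to_cconf [simp]: "of_cconf (to_cconf x) = x"
  unfolding of_cconf_def to_cconf_def by (simp add: vec_eq_iff)

lemma to_cconf_of_cconf [simp]: "to_cconf (of_cconf H) = H"
  unfolding of_cconf_def to_cconf_def by (simp add: fun_eq_iff)

lemma to_cconf_inject: "to_cconf x = to_cconf y \<Longrightarrow> x = y"
  by (metis of_cconf_to_cconf)

lemma to_cconf_add: "to_cconf (x + y) = (\<lambda>i. to_cconf x i + to_cconf y i)"
  and to_cconf_scaleR: "to_cconf (c *\<^sub>R x) = (\<lambda>i. of_real c * to_cconf x i)"
  unfolding to_cconf_def by (simp_all add: complex_of_vec_add complex_of_vec_scaleR)

lemma linear_via_cconf:
  assumes "\<And>X Y. F (\<lambda>i. X i + Y i) = (\<lambda>i. F X i + F Y i)"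
    and "\<And>c X. F (\<lambda>i. of_real c * X i) = (\<lambda>i. of_real c * F X i)"
  shows "linear (\<lambda>x. of_cconf (F (to_cconf x)))"
proof -
  have "of_cconf (\<lambda>i. X i + Y i) = of_cconf X + of_cconf Y"
    and "of_cconf (\<lambda>i. of_real c * X i) = c *\<^sub>R of_cconf X" for X Y c
    by (auto intro!: to_cconf_inject simp: to_cconf_add to_cconf_scaleR)
  then show ?thesis
    by (intro linearI) (simp_all add: to_cconf_add to_cconf_scaleR assms)
qed

lemma rotating_conf:
  "(\<chi> i. r *\<^sub>R rot th (a$i)) = of_cconf (\<lambda>i. (of_real r * cis th) * to_cconf a i)"
  by (rule to_cconf_inject) (simp add: to_cconf_def fun_eq_iff complex_of_vec_scaleR complex_of_vec_rot)

section \<open>The derivative of the force field\<close>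

lemma has_derivative_vec_lambda:
  fixes f :: "'n::finite \<Rightarrow> 'a::real_normed_vector \<Rightarrow> 'b::real_normed_vector"
  assumes "\<And>i. (f i has_derivative f' i) (at x)"
  shows "((\<lambda>x. \<chi> i. f i x) has_derivative (\<lambda>h. \<chi> i. f' i h)) (at x)"
proof -
  have axis_sum: "(\<chi> i. g i) = (\<Sum>i\<in>UNIV. axis i (g i))" for g :: "'n \<Rightarrow> 'b"
    by (simp add: vec_eq_iff axis_def)
  have "bounded_linear (axis i :: 'b \<Rightarrow> 'b^'n)" for i
  proof (rule bounded_linear_intro[where K=1])
    show "norm (axis i x) \<le> norm x * 1" for x :: 'b
    proof -
      have "(\<Sum>j\<in>UNIV. (norm (axis i x $ j))\<^sup>2) = (\<Sum>j\<in>UNIV. if j = i then (norm x)\<^sup>2 else 0)"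
        by (rule sum.cong) (auto simp: axis_def)
      then show ?thesis by (simp add: norm_vec_def L2_set_def)
    qed
  qed (simp_all add: axis_def vec_eq_iff)
  then show ?thesis unfolding axis_sum
    by (intro has_derivative_sum) (rule bounded_linear.has_derivative[OF _ assms])
qed

lemma has_derivative_inverse_cube_scaled:
  fixes y :: "'a::real_inner"
  assumes "y \<noteq> 0"
  shows "((\<lambda>y. (1 / norm y ^ 3) *\<^sub>R y) has_derivative
     (\<lambda>h. (1 / norm y ^ 3) *\<^sub>R h - (3 * (y \<bullet> h) / norm y ^ 5) *\<^sub>R y)) (at y)"
proof -
  have n: "norm y \<noteq> 0" using assms by simp
  have d: "((\<lambda>y. norm y) has_derivative (\<lambda>h. h \<bullet> sgn y)) (at y)"
    using has_derivative_norm[OF assms] by simp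
  show ?thesis
    apply (rule has_derivative_eq_rhs)
     apply (rule derivative_eq_intros d has_derivative_ident refl assms | simp add: n)+
    apply (rule ext)
    apply (simp add: sgn_div_norm inner_commute n)
    apply (rule disjI1)
    apply (simp add: field_simps n power_eq_if)
    done
qed

definition force_deriv :: "real^3 \<Rightarrow> real^3 \<Rightarrow> conf \<Rightarrow> conf \<Rightarrow> conf" where
  "force_deriv m e x h = (\<chi> i. (1 / m$i) *\<^sub>R (\<Sum>j\<in>UNIV - {i}. (m$i * m$j - e$i * e$j) *\<^sub>R
     ((1 / norm (x$j - x$i) ^ 3) *\<^sub>R (h$j - h$i)
      - (3 * ((x$j - x$i) \<bullet> (h$j - h$i)) / norm (x$j - x$i) ^ 5) *\<^sub>R (x$j - x$i))))"

lemma force_has_derivative: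
  assumes "\<forall>i j. i \<noteq> j \<longrightarrow> x$i \<noteq> x$j"
  shows "(force m e has_derivative force_deriv m e x) (at x)"
proof -
  have pair: "((\<lambda>x. (1 / norm (x$j - x$i) ^ 3) *\<^sub>R (x$j - x$i)) has_derivative
      (\<lambda>h. (1 / norm (x$j - x$i) ^ 3) *\<^sub>R (h$j - h$i)
        - (3 * ((x$j - x$i) \<bullet> (h$j - h$i)) / norm (x$j - x$i) ^ 5) *\<^sub>R (x$j - x$i))) (at x)"
    if "j \<in> UNIV - {i}" for i j :: 3
  proof -
    have "((\<lambda>x::conf. x$j - x$i) has_derivative (\<lambda>h. h$j - h$i)) (at x)"
      by (intro bounded_linear_imp_has_derivative bounded_linear_sub bounded_linear_vec_nth)
    moreover have "x$j - x$i \<noteq> 0" using assms that by auto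
    ultimately show ?thesis
      by (rule has_derivative_compose[OF _ has_derivative_inverse_cube_scaled])
  qed
  have force_eq: "force m e = (\<lambda>x. \<chi> i. (1 / m$i) *\<^sub>R (\<Sum>j\<in>UNIV - {i}. (m$i * m$j - e$i * e$j) *\<^sub>R
     ((1 / norm (x$j - x$i) ^ 3) *\<^sub>R (x$j - x$i))))"
    by (rule ext) (simp add: force_def divide_inverse)
  show ?thesis unfolding force_eq force_deriv_def
    by (intro has_derivative_vec_lambda has_derivative_scaleR_right has_derivative_sum pair)
qed

lemma frechet_derivative_force:
  "\<forall>i j. i \<noteq> j \<longrightarrow> x$i \<noteq> x$j \<Longrightarrow> frechet_derivative (force m e) (at x) = force_deriv m e x"
  by (rule frechet_derivative_at[symmetric]) (rule force_has_derivative)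

section \<open>Modes of a weighted triangle\<close>

definition total_mass :: "real^3 \<Rightarrow> real" where
  "total_mass m = m$1 + m$2 + m$3"

definition weighted_triangle :: "real^3 \<Rightarrow> cconf \<Rightarrow> bool" where
  "weighted_triangle m A \<longleftrightarrow> (\<forall>i. m$i > 0) \<and> A 1 \<noteq> A 2 \<and> A 2 \<noteq> A 3 \<and> A 1 \<noteq> A 3"

lemma weighted_triangle_total_mass_pos: "weighted_triangle m A \<Longrightarrow> total_mass m > 0"
  unfolding weighted_triangle_def total_mass_def by (auto intro: add_pos_pos)

lemma weighted_triangle_mass_pos: "weighted_triangle m A \<Longrightarrow> m$i > 0"
  unfolding weighted_triangle_def by auto

lemma weighted_triangle_mass_nonzero: "weighted_triangle m A \<Longrightarrow> m$i \<noteq> 0"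
  using weighted_triangle_mass_pos by (metis less_irrefl)

lemma weighted_triangle_distinct: "weighted_triangle m A \<Longrightarrow> i \<noteq> j \<Longrightarrow> A i \<noteq> A j"
  unfolding weighted_triangle_def using exhaust_3[of i] exhaust_3[of j] by (elim disjE) auto

definition centre :: "real^3 \<Rightarrow> cconf \<Rightarrow> complex" where
  "centre m A = (\<Sum>i\<in>UNIV. of_real (m$i) * A i) / of_real (total_mass m)"

definition centred :: "real^3 \<Rightarrow> cconf \<Rightarrow> cconf" where
  "centred m A i = A i - centre m A"

text \<open>Together with the constants and the centred configuration, the side mode spans $\mathbb{C}^3$,
  and the linearised field maps each of the three complex lines to itself.\<close>
definition side_mode :: "real^3 \<Rightarrow> cconf \<Rightarrow> cconf" where
  "side_mode m A i =
     (if i = 1 then cnj (A 3 - A 2) / of_real (m$1)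
      else if i = 2 then cnj (A 1 - A 3) / of_real (m$2)
      else cnj (A 2 - A 1) / of_real (m$3))"

lemma side_mode_simps:
  "side_mode m A 1 = cnj (A 3 - A 2) / of_real (m$1)"
  "side_mode m A 2 = cnj (A 1 - A 3) / of_real (m$2)"
  "side_mode m A 3 = cnj (A 2 - A 1) / of_real (m$3)"
  by (simp_all add: side_mode_def)

definition mass_laplacian :: "real^3 \<Rightarrow> cconf \<Rightarrow> cconf" where
  "mass_laplacian m H i = (\<Sum>j\<in>UNIV. of_real (m$j) * (H j - H i))"

definition twisted_laplacian :: "real^3 \<Rightarrow> cconf \<Rightarrow> cconf \<Rightarrow> cconf" where
  "twisted_laplacian m A H i =
     (\<Sum>j\<in>UNIV. of_real (m$j) * ((A j - A i) / cnj (A j - A i)) * cnj (H j - H i))"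

definition linearized_field :: "real^3 \<Rightarrow> cconf \<Rightarrow> complex \<Rightarrow> cconf \<Rightarrow> cconf" where
  "linearized_field m A \<omega> H i = - (1/2) * mass_laplacian m H i - (3/2) * \<omega> * twisted_laplacian m A H i"

definition twist :: "complex \<Rightarrow> complex \<Rightarrow> complex \<Rightarrow> real \<Rightarrow> real \<Rightarrow> real \<Rightarrow> complex" where
  "twist A1 A2 A3 m1 m2 m3 =
     - (of_real m1 * (cnj (A3 - A2) / (A3 - A2)) + of_real m2 * (cnj (A1 - A3) / (A1 - A3))
        + of_real m3 * (cnj (A2 - A1) / (A2 - A1)))
     * ((A2 - A1) * (A3 - A2) * (A1 - A3) / (cnj (A2 - A1) * cnj (A3 - A2) * cnj (A1 - A3)))"

definition twist_constant :: "real^3 \<Rightarrow> cconf \<Rightarrow> complex" where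
  "twist_constant m A = twist (A 1) (A 2) (A 3) (m$1) (m$2) (m$3)"

lemma twist_rotate: "twist A2 A3 A1 m2 m3 m1 = twist A1 A2 A3 m1 m2 m3"
  unfolding twist_def by (simp add: mult_ac add_ac)

lemma twist_side_mode_identity:
  fixes x y p q w t m1 m2 m3 :: complex
  assumes "x \<noteq> 0" "y \<noteq> 0" "w \<noteq> 0" "p \<noteq> 0" "q \<noteq> 0" "t \<noteq> 0" "m1 \<noteq> 0" "m2 \<noteq> 0" "m3 \<noteq> 0"
    and "w = x + y" "t = p + q"
  shows "m2 * (x/p) * ((-w)/m2 - y/m1) + m3 * (w/t) * (x/m3 - y/m1)
    = - (m1 * (q/y) + m2 * (t/w) + m3 * (p/x)) * ((x*y*w) / (p*q*t)) * (q/m1)"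
proof -
  have "m2 * (x/p) * ((-w)/m2 - y/m1) + m3 * (w/t) * (x/m3 - y/m1) =
     (m1*x*t*(-w) - m2*x*t*y + w*p*(m1*x) - w*p*(m3*y)) / (p*t*m1)"
    using assms(1-9) by (simp add: field_simps)
  also have "\<dots> = - (m1 * (q/y) + m2 * (t/w) + m3 * (p/x)) * ((x*y*w) / (p*q*t)) * (q/m1)"
    using assms(1-9) apply (simp add: field_simps) by (simp only: assms(10,11)) algebra
  finally show ?thesis .
qed

lemma twisted_laplacian_side_mode_vertex:
  fixes A1 A2 A3 :: complex and m1 m2 m3 :: real
  assumes "A1 \<noteq> A2" "A2 \<noteq> A3" "A1 \<noteq> A3" "m1 \<noteq> 0" "m2 \<noteq> 0" "m3 \<noteq> 0"
  shows "of_real m2 * ((A2-A1)/cnj(A2-A1)) * ((A1-A3)/of_real m2 - (A3-A2)/of_real m1)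
       + of_real m3 * ((A3-A1)/cnj(A3-A1)) * ((A2-A1)/of_real m3 - (A3-A2)/of_real m1)
     = twist A1 A2 A3 m1 m2 m3 * (cnj(A3-A2)/of_real m1)"
proof -
  have flip: "A1 - A3 = - (A3 - A1)" by simp
  have e2: "cnj (A1 - A3) / (A1 - A3) = cnj (A3 - A1) / (A3 - A1)"
    by (metis complex_cnj_minus flip minus_diff_eq minus_divide_divide)
  have e3: "(A2-A1)*(A3-A2)*(A1-A3)/(cnj(A2-A1)*cnj(A3-A2)*cnj(A1-A3))
      = (A2-A1)*(A3-A2)*(A3-A1)/(cnj(A2-A1)*cnj(A3-A2)*cnj(A3-A1))"
    by (metis (no_types, lifting) complex_cnj_minus flip minus_divide_divide minus_mult_right)
  show ?thesis unfolding twist_def e2 e3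
    by (subst flip, rule twist_side_mode_identity) (use assms in auto)
qed

lemma mass_laplacian_eq: "mass_laplacian m H i = (\<Sum>j\<in>UNIV. of_real (m$j) * H j) - of_real (total_mass m) * H i"
  unfolding mass_laplacian_def total_mass_def by (simp add: sum_3 algebra_simps)

lemma mass_moment_centred:
  assumes "total_mass m \<noteq> 0"
  shows "(\<Sum>i\<in>UNIV. of_real (m$i) * centred m A i) = 0"
proof -
  have "(\<Sum>i\<in>UNIV. of_real (m$i) * centred m A i)
      = (\<Sum>i\<in>UNIV. of_real (m$i) * A i) - of_real (total_mass m) * centre m A"
    unfolding centred_def sum_3 total_mass_def by (simp add: algebra_simps)
  then show ?thesis using assms unfolding centre_def by simp
qed

lemma mass_moment_side_mode: "weighted_triangle m A \<Longrightarrow> (\<Sum>i\<in>UNIV. of_real (m$i) * side_mode m A i) = 0"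
  using weighted_triangle_mass_nonzero[of m A] by (simp add: sum_3 side_mode_simps)

lemma mass_laplacian_centred: "weighted_triangle m A \<Longrightarrow> mass_laplacian m (centred m A) i = - of_real (total_mass m) * centred m A i"
  using weighted_triangle_total_mass_pos[of m A] by (simp add: mass_laplacian_eq mass_moment_centred)

lemma mass_laplacian_side_mode: "weighted_triangle m A \<Longrightarrow> mass_laplacian m (side_mode m A) i = - of_real (total_mass m) * side_mode m A i"
  by (simp add: mass_laplacian_eq mass_moment_side_mode)

lemma mass_laplacian_translate: "mass_laplacian m (centred m' A) = mass_laplacian m A"
  unfolding mass_laplacian_def centred_def by simp

lemma twisted_laplacian_centred:
  assumes "weighted_triangle m A"
  shows "twisted_laplacian m A (centred m A) i = - of_real (total_mass m) * centred m A i"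
proof -
  have cancel: "z / cnj z * cnj z = z" for z :: complex
    by (cases "z = 0") auto
  have "centred m A j - centred m A i = A j - A i" for j
    by (simp add: centred_def)
  then have "twisted_laplacian m A (centred m A) i = mass_laplacian m A i"
    unfolding twisted_laplacian_def mass_laplacian_def by (simp only: mult.assoc cancel)
  then show ?thesis
    using mass_laplacian_centred[OF assms, of i] unfolding mass_laplacian_translate by simp
qed

lemma twisted_laplacian_side_mode:
  assumes "weighted_triangle m A"
  shows "twisted_laplacian m A (side_mode m A) i = twist_constant m A * side_mode m A i"
proof -
  have m: "m$1 \<noteq> 0" "m$2 \<noteq> 0" "m$3 \<noteq> 0" using weighted_triangle_mass_nonzero[OF assms] by auto
  have d: "A 1 \<noteq> A 2" "A 2 \<noteq> A 3" "A 1 \<noteq> A 3" using assms unfolding weighted_triangle_def by auto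
  have "twisted_laplacian m A (side_mode m A) 1 = twist (A 1) (A 2) (A 3) (m$1) (m$2) (m$3) * side_mode m A 1"
    unfolding twisted_laplacian_def sum_3 side_mode_simps
    using twisted_laplacian_side_mode_vertex[of "A 1" "A 2" "A 3" "m$1" "m$2" "m$3"] d m by simp
  moreover have "twisted_laplacian m A (side_mode m A) 2 = twist (A 2) (A 3) (A 1) (m$2) (m$3) (m$1) * side_mode m A 2"
    unfolding twisted_laplacian_def sum_3 side_mode_simps
    using twisted_laplacian_side_mode_vertex[of "A 2" "A 3" "A 1" "m$2" "m$3" "m$1"] d m by (simp add: add_ac)
  moreover have "twisted_laplacian m A (side_mode m A) 3 = twist (A 3) (A 1) (A 2) (m$3) (m$1) (m$2) * side_mode m A 3"
    unfolding twisted_laplacian_def sum_3 side_mode_simps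
    using twisted_laplacian_side_mode_vertex[of "A 3" "A 1" "A 2" "m$3" "m$1" "m$2"] d m by (simp add: add_ac)
  ultimately show ?thesis
    unfolding twist_constant_def using exhaust_3[of i] by (auto simp: twist_rotate)
qed

definition mass_inner :: "real^3 \<Rightarrow> cconf \<Rightarrow> cconf \<Rightarrow> complex" where
  "mass_inner m X Y = (\<Sum>i\<in>UNIV. of_real (m$i) * X i * cnj (Y i))"

definition mode_comb :: "complex \<Rightarrow> complex \<Rightarrow> complex \<Rightarrow> cconf \<Rightarrow> cconf \<Rightarrow> cconf" where
  "mode_comb x y w A B i = x + y * A i + w * B i"

lemma mass_inner_add: "mass_inner m (\<lambda>i. X i + Y i) Z = mass_inner m X Z + mass_inner m Y Z"
  and mass_inner_diff: "mass_inner m (\<lambda>i. X i - Y i) Z = mass_inner m X Z - mass_inner m Y Z"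
  and mass_inner_scale: "mass_inner m (\<lambda>i. c * X i) Z = c * mass_inner m X Z"
  and mass_inner_comb: "mass_inner m (mode_comb x y w A B) Z
         = x * mass_inner m (\<lambda>_. 1) Z + y * mass_inner m A Z + w * mass_inner m B Z"
  and mass_inner_commute: "mass_inner m X Y = cnj (mass_inner m Y X)"
  and mass_inner_one_one: "mass_inner m (\<lambda>_. 1) (\<lambda>_. 1) = of_real (total_mass m)"
  unfolding mass_inner_def mode_comb_def total_mass_def sum_3 by (simp_all add: algebra_simps)

lemma mass_inner_self: "mass_inner m X X = of_real (\<Sum>i\<in>UNIV. m$i * (cmod (X i))\<^sup>2)"
  unfolding mass_inner_def by (simp add: mult.assoc flip: complex_norm_square)

lemma mass_inner_self_nonzero:
  assumes "\<And>i. m$i > 0" "X k \<noteq> 0"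
  shows "mass_inner m X X \<noteq> 0"
proof -
  have "(\<Sum>i\<in>UNIV. m$i * (cmod (X i))\<^sup>2) > 0"
    using assms assms(1)[THEN less_imp_le] by (intro sum_pos2[of UNIV k]) auto
  then show ?thesis unfolding mass_inner_self of_real_eq_0_iff by linarith
qed

lemma modes_orthogonal:
  assumes "weighted_triangle m A"
  shows "mass_inner m (centred m A) (\<lambda>_. 1) = 0" "mass_inner m (\<lambda>_. 1) (centred m A) = 0"
    "mass_inner m (side_mode m A) (\<lambda>_. 1) = 0" "mass_inner m (\<lambda>_. 1) (side_mode m A) = 0"
    "mass_inner m (centred m A) (side_mode m A) = 0" "mass_inner m (side_mode m A) (centred m A) = 0"
proof -
  show c1: "mass_inner m (centred m A) (\<lambda>_. 1) = 0"
    using mass_moment_centred weighted_triangle_total_mass_pos[OF assms] unfolding mass_inner_def by simp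
  show s1: "mass_inner m (side_mode m A) (\<lambda>_. 1) = 0"
    using mass_moment_side_mode[OF assms] unfolding mass_inner_def by simp
  show cs: "mass_inner m (centred m A) (side_mode m A) = 0"
    using weighted_triangle_mass_nonzero[OF assms]
    unfolding mass_inner_def sum_3 side_mode_simps centred_def by (simp add: field_simps)
  show "mass_inner m (\<lambda>_. 1) (centred m A) = 0" "mass_inner m (\<lambda>_. 1) (side_mode m A) = 0"
    "mass_inner m (side_mode m A) (centred m A) = 0"
    using c1 s1 cs by (metis complex_cnj_zero mass_inner_commute)+
qed

lemma mode_norms_nonzero:
  assumes "weighted_triangle m A"
  shows "mass_inner m (centred m A) (centred m A) \<noteq> 0"
    "mass_inner m (side_mode m A) (side_mode m A) \<noteq> 0"
proof -
  have "A 1 \<noteq> A 2" "A 2 \<noteq> A 3" "m$1 > 0"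
    using assms unfolding weighted_triangle_def by auto
  then have "centred m A 1 \<noteq> 0 \<or> centred m A 2 \<noteq> 0" "side_mode m A 1 \<noteq> 0"
    unfolding centred_def side_mode_simps by auto
  then show "mass_inner m (centred m A) (centred m A) \<noteq> 0"
    "mass_inner m (side_mode m A) (side_mode m A) \<noteq> 0"
    using mass_inner_self_nonzero[OF weighted_triangle_mass_pos[OF assms]] by blast+
qed

definition translation_coord :: "real^3 \<Rightarrow> cconf \<Rightarrow> complex" where
  "translation_coord m H = mass_inner m H (\<lambda>_. 1) / of_real (total_mass m)"

definition shape_coord :: "real^3 \<Rightarrow> cconf \<Rightarrow> cconf \<Rightarrow> complex" where
  "shape_coord m A H = mass_inner m H (centred m A) / mass_inner m (centred m A) (centred m A)"

definition side_coord :: "real^3 \<Rightarrow> cconf \<Rightarrow> cconf \<Rightarrow> complex" where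
  "side_coord m A H = mass_inner m H (side_mode m A) / mass_inner m (side_mode m A) (side_mode m A)"

lemma mode_coords:
  assumes "weighted_triangle m A"
  shows "translation_coord m (mode_comb x y w (centred m A) (side_mode m A)) = x"
    "shape_coord m A (mode_comb x y w (centred m A) (side_mode m A)) = y"
    "side_coord m A (mode_comb x y w (centred m A) (side_mode m A)) = w"
  using weighted_triangle_total_mass_pos[OF assms] modes_orthogonal[OF assms] mode_norms_nonzero[OF assms]
  unfolding translation_coord_def shape_coord_def side_coord_def mass_inner_comb
  by (simp_all add: mass_inner_one_one)

text \<open>Orthogonality to the three modes forces the weighted values $m_i R_i$ to be a real multiple
  $\lambda$ of the conjugated opposite sides; pairing with the side mode then gives $\lambda = 0$.\<close>
lemma orthogonal_to_modes_eq_zero: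
  assumes t: "weighted_triangle m A" and h1: "mass_inner m R (\<lambda>_. 1) = 0"
    and h2: "mass_inner m R (centred m A) = 0" and h3: "mass_inner m R (side_mode m A) = 0"
  shows "R = (\<lambda>_. 0)"
proof -
  have p: "m$i > 0" for i using weighted_triangle_mass_pos[OF t] .
  define v where "v i = of_real (m$i) * R i" for i
  define D1 where "D1 = cnj (A 3 - A 2)"
  define D2 where "D2 = cnj (A 1 - A 3)"
  define D3 where "D3 = cnj (A 2 - A 1)"
  have D1nz: "D1 \<noteq> 0" using t unfolding D1_def weighted_triangle_def by auto
  have s1: "v 1 + v 2 + v 3 = 0" using h1 unfolding mass_inner_def sum_3 v_def by simp
  have "mass_inner m R (centred m A)
      = (v 1 * cnj (A 1) + v 2 * cnj (A 2) + v 3 * cnj (A 3)) - (v 1 + v 2 + v 3) * cnj (centre m A)"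
    unfolding mass_inner_def sum_3 v_def centred_def by (simp add: algebra_simps)
  then have s2: "v 1 * cnj (A 1) + v 2 * cnj (A 2) + v 3 * cnj (A 3) = 0" using h2 s1 by simp
  define lam where "lam = v 1 / D1"
  have v1: "v 1 = lam * D1" unfolding lam_def using D1nz by simp
  have v3: "v 3 = - v 1 - v 2" using s1 by algebra
  have "v 1 * D2 = v 2 * D1" using s2 unfolding v3 D1_def D2_def by (simp add: algebra_simps)
  then have v2: "v 2 = lam * D2" unfolding lam_def using D1nz by (simp add: field_simps)
  have v3': "v 3 = lam * D3" unfolding v3 v1 v2 D1_def D2_def D3_def by (simp add: algebra_simps)
  have "mass_inner m R (side_mode m A) = v 1 * cnj (side_mode m A 1) + v 2 * cnj (side_mode m A 2)
      + v 3 * cnj (side_mode m A 3)"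
    unfolding mass_inner_def sum_3 v_def by (simp add: algebra_simps)
  also have "\<dots> = lam * (D1 * cnj D1 / of_real (m$1) + D2 * cnj D2 / of_real (m$2) + D3 * cnj D3 / of_real (m$3))"
    unfolding v1 v2 v3' side_mode_simps D1_def D2_def D3_def using p[of 1] p[of 2] p[of 3]
    by (simp add: field_simps)
  also have "\<dots> = lam * of_real ((cmod D1)\<^sup>2 / m$1 + (cmod D2)\<^sup>2 / m$2 + (cmod D3)\<^sup>2 / m$3)"
    by (simp flip: complex_norm_square)
  finally have "lam * of_real ((cmod D1)\<^sup>2 / m$1 + (cmod D2)\<^sup>2 / m$2 + (cmod D3)\<^sup>2 / m$3) = 0"
    using h3 by simp
  moreover have "(cmod D1)\<^sup>2 / m$1 + (cmod D2)\<^sup>2 / m$2 + (cmod D3)\<^sup>2 / m$3 > 0"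
    using D1nz p[of 1] p[of 2] p[of 3] by (intro add_pos_nonneg) auto
  ultimately have "lam = 0" by (metis mult_eq_0_iff of_real_eq_0_iff less_irrefl)
  then have "v i = 0" for i using v1 v2 v3' exhaust_3[of i] by auto
  then show ?thesis using p unfolding v_def by (auto simp: fun_eq_iff) (metis less_irrefl)
qed

lemma mode_decomposition:
  assumes t: "weighted_triangle m A"
  shows "H = mode_comb (translation_coord m H) (shape_coord m A H) (side_coord m A H) (centred m A) (side_mode m A)"
    (is "H = ?C")
proof -
  have "mass_inner m ?C (\<lambda>_. 1) = mass_inner m H (\<lambda>_. 1)"
    "mass_inner m ?C (centred m A) = mass_inner m H (centred m A)"
    "mass_inner m ?C (side_mode m A) = mass_inner m H (side_mode m A)"
    using mode_coords[OF t, of "translation_coord m H" "shape_coord m A H" "side_coord m A H"]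
      weighted_triangle_total_mass_pos[OF t] mode_norms_nonzero[OF t]
    unfolding translation_coord_def shape_coord_def side_coord_def by simp_all
  then have "(\<lambda>i. H i - ?C i) = (\<lambda>_. 0)"
    by (intro orthogonal_to_modes_eq_zero[OF t]) (simp_all add: mass_inner_diff)
  then show ?thesis by (simp add: fun_eq_iff)
qed

lemma linearized_field_comb:
  assumes t: "weighted_triangle m A"
  shows "linearized_field m A \<omega> (mode_comb x y w (centred m A) (side_mode m A)) =
    mode_comb 0 (of_real (total_mass m) / 2 * y + 3/2 * \<omega> * of_real (total_mass m) * cnj y)
           (of_real (total_mass m) / 2 * w - 3/2 * \<omega> * cnj w * twist_constant m A)
           (centred m A) (side_mode m A)"
proof -
  have "mass_laplacian m (mode_comb x y w B C) i = y * mass_laplacian m B i + w * mass_laplacian m C i"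
    for B C i unfolding mass_laplacian_def mode_comb_def sum_3 by (simp add: algebra_simps)
  moreover have "twisted_laplacian m A (mode_comb x y w B C) i
       = cnj y * twisted_laplacian m A B i + cnj w * twisted_laplacian m A C i" for B C i
  proof -
    define u where "u j = of_real (m$j) * ((A j - A i) / cnj (A j - A i))" for j
    have cnj_comb: "cnj (mode_comb x y w B C j - mode_comb x y w B C i)
        = cnj y * cnj (B j - B i) + cnj w * cnj (C j - C i)" for j
      by (simp add: mode_comb_def algebra_simps)
    show ?thesis
      unfolding twisted_laplacian_def u_def[symmetric] cnj_comb by (simp add: sum_3 algebra_simps)
  qed
  ultimately show ?thesis
    unfolding linearized_field_def
    by (simp add: fun_eq_iff mode_comb_def algebra_simps mass_laplacian_centred[OF t]
        mass_laplacian_side_mode[OF t] twisted_laplacian_centred[OF t] twisted_laplacian_side_mode[OF t])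
qed

definition mode_transfer :: "real^3 \<Rightarrow> cconf \<Rightarrow> real^3 \<Rightarrow> cconf \<Rightarrow> complex \<Rightarrow> cconf \<Rightarrow> cconf" where
  "mode_transfer m A m' A' \<tau> H =
     mode_comb (translation_coord m H) (shape_coord m A H) (\<tau> * side_coord m A H) (centred m' A') (side_mode m' A')"

lemma mode_transfer_comb:
  "weighted_triangle m A \<Longrightarrow> mode_transfer m A m' A' \<tau> (mode_comb x y w (centred m A) (side_mode m A))
     = mode_comb x y (\<tau> * w) (centred m' A') (side_mode m' A')"
  unfolding mode_transfer_def by (simp add: mode_coords)

lemma mode_transfer_add:
  "mode_transfer m A m' A' \<tau> (\<lambda>i. X i + Y i) = (\<lambda>i. mode_transfer m A m' A' \<tau> X i + mode_transfer m A m' A' \<tau> Y i)"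
  and mode_transfer_scale:
  "mode_transfer m A m' A' \<tau> (\<lambda>i. c * X i) = (\<lambda>i. c * mode_transfer m A m' A' \<tau> X i)"
  unfolding mode_transfer_def mode_comb_def translation_coord_def shape_coord_def side_coord_def
    mass_inner_add mass_inner_scale
  by (simp_all add: fun_eq_iff algebra_simps add_divide_distrib)

lemma mode_transfer_inverse:
  assumes "weighted_triangle m A" "weighted_triangle m' A'" "\<tau> \<noteq> 0"
  shows "mode_transfer m' A' m A (1 / \<tau>) (mode_transfer m A m' A' \<tau> H) = H"
  using assms mode_decomposition[OF assms(1), of H]
  by (simp add: mode_transfer_def[of m A] mode_transfer_comb)

lemma mode_transfer_intertwines:
  assumes t: "weighted_triangle m A" and t': "weighted_triangle m' A'"
    and M: "total_mass m' = total_mass m"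
    and \<tau>: "\<tau> * twist_constant m A = cnj \<tau> * twist_constant m' A'"
  shows "mode_transfer m A m' A' \<tau> (linearized_field m A \<omega> H)
       = linearized_field m' A' \<omega> (mode_transfer m A m' A' \<tau> H)"
proof -
  let ?w = "side_coord m A H"
  have "\<tau> * (of_real (total_mass m) / 2 * ?w - 3/2 * \<omega> * cnj ?w * twist_constant m A)
     = of_real (total_mass m) / 2 * (\<tau> * ?w) - 3/2 * \<omega> * cnj (\<tau> * ?w) * twist_constant m' A'"
    using \<tau> by (simp add: algebra_simps)
  then show ?thesis
    using mode_decomposition[OF t, of H]
    by (metis M linearized_field_comb[OF t] linearized_field_comb[OF t'] mode_transfer_comb[OF t]
        mode_transfer_def)
qed

section \<open>Forces along a scaled triangle\<close>

definition newtonian_along :: "real^3 \<Rightarrow> real^3 \<Rightarrow> cconf \<Rightarrow> real \<Rightarrow> bool" where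
  "newtonian_along m e A \<kappa> \<longleftrightarrow>
     (\<forall>i j. i \<noteq> j \<longrightarrow> m$i * m$j - e$i * e$j = m$i * m$j * \<kappa> * cmod (A j - A i) ^ 3)"

lemma newtonian_alongD:
  "newtonian_along m e A \<kappa> \<Longrightarrow> i \<noteq> j
   \<Longrightarrow> m$i * m$j - e$i * e$j = m$i * m$j * \<kappa> * cmod (A j - A i) ^ 3"
  unfolding newtonian_along_def by (elim allE impE)

lemma sum_remove_zero:
  fixes f :: "'n::finite \<Rightarrow> 'a::comm_monoid_add"
  assumes "f i = 0"
  shows "(\<Sum>j\<in>UNIV - {i}. f j) = (\<Sum>j\<in>UNIV. f j)"
  by (rule sum.mono_neutral_left) (use assms in auto)

lemma to_cconf_force:
  "to_cconf (force m e x) i = (\<Sum>j\<in>UNIV - {i}.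
     of_real (1 / m$i * ((m$i * m$j - e$i * e$j) / cmod (to_cconf x j - to_cconf x i) ^ 3))
     * (to_cconf x j - to_cconf x i))"
  unfolding to_cconf_def force_def
  by (simp add: complex_of_vec_scaleR complex_of_vec_sum complex_of_vec_diff sum_distrib_left
      norm_complex_of_vec[symmetric] mult.assoc)

lemma force_along_scaled:
  assumes "z \<noteq> 0" and "\<forall>i. m$i > 0" and "newtonian_along m e A \<kappa>"
  shows "to_cconf (force m e (of_cconf (\<lambda>i. z * A i)))
       = (\<lambda>i. of_real (\<kappa> / cmod z ^ 3) * z * mass_laplacian m A i)"
proof (rule ext)
  fix i
  have "to_cconf (force m e (of_cconf (\<lambda>i. z * A i))) i
      = (\<Sum>j\<in>UNIV - {i}. of_real (\<kappa> / cmod z ^ 3) * z * (of_real (m$j) * (A j - A i)))"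
    unfolding to_cconf_force to_cconf_of_cconf
  proof (rule sum.cong)
    fix j assume "j \<in> UNIV - {i}"
    then have k: "m$i * m$j - e$i * e$j = m$i * m$j * \<kappa> * cmod (A j - A i) ^ 3"
      by (intro newtonian_alongD[OF assms(3)]) auto
    have "m$i \<noteq> 0" using assms(2) by (metis less_irrefl)
    show "of_real (1 / m$i * ((m$i * m$j - e$i * e$j) / cmod (z * A j - z * A i) ^ 3)) * (z * A j - z * A i)
        = of_real (\<kappa> / cmod z ^ 3) * z * (of_real (m$j) * (A j - A i))"
    proof (cases "A j = A i")
      case False
      have "cmod (z * A j - z * A i) = cmod z * cmod (A j - A i)"
        by (metis norm_mult right_diff_distrib)
      then show ?thesis unfolding k using \<open>m$i \<noteq> 0\<close> assms(1) False
        by (simp add: field_simps power_mult_distrib)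
    qed simp
  qed simp
  also have "\<dots> = of_real (\<kappa> / cmod z ^ 3) * z * mass_laplacian m A i"
    unfolding mass_laplacian_def sum_distrib_left[symmetric] by (subst sum_remove_zero) simp_all
  finally show "to_cconf (force m e (of_cconf (\<lambda>i. z * A i))) i
      = of_real (\<kappa> / cmod z ^ 3) * z * mass_laplacian m A i" .
qed

text \<open>The antilinear part comes from $\mathrm{Re}(\bar d w) = (\bar d w + d \bar w)/2$.\<close>
lemma complex_of_vec_inverse_cube_deriv:
  fixes d w :: "real^2"
  assumes "d \<noteq> 0"
  shows "complex_of_vec ((1 / norm d ^ 3) *\<^sub>R w - (3 * (d \<bullet> w) / norm d ^ 5) *\<^sub>R d)
     = of_real (1 / norm d ^ 3) * (- complex_of_vec w / 2
         - 3/2 * (complex_of_vec d / cnj (complex_of_vec d)) * cnj (complex_of_vec w))"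
proof -
  define D where "D = complex_of_vec d"
  define W where "W = complex_of_vec w"
  define N where "N = complex_of_real (cmod D)"
  have "D \<noteq> 0" using assms unfolding D_def by (metis complex_of_vec_zero complex_of_vec_inject)
  then have nz: "N \<noteq> 0" "cnj D \<noteq> 0" "D \<noteq> 0" unfolding N_def by simp_all
  have N2: "N ^ 2 = D * cnj D" unfolding N_def by (simp flip: complex_norm_square)
  have "N ^ 5 = N ^ 3 * N ^ 2" by (simp add: eval_nat_numeral)
  then have N5: "N ^ 5 = N ^ 3 * (D * cnj D)" unfolding N2 .
  have re: "of_real (Re (cnj D * W)) = (cnj D * W + D * cnj W) / 2"
    by (simp add: complex_eq_iff)
  have "of_real (3 * Re (cnj D * W) / cmod D ^ 5) * D
      = 3 * ((cnj D * W + D * cnj W) / 2) / N ^ 5 * D"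
    unfolding N_def re[symmetric] by simp
  also have "\<dots> = of_real (1 / cmod D ^ 3) * (3/2 * W + 3/2 * (D / cnj D) * cnj W)"
    unfolding N5 using nz by (simp add: N_def field_simps)
  finally have key: "of_real (3 * Re (cnj D * W) / cmod D ^ 5) * D
      = of_real (1 / cmod D ^ 3) * (3/2 * W + 3/2 * (D / cnj D) * cnj W)" .
  show ?thesis
    unfolding complex_of_vec_diff complex_of_vec_scaleR D_def[symmetric] W_def[symmetric]
      norm_complex_of_vec[symmetric] inner_complex_of_vec key
    by (simp add: algebra_simps)
qed

lemma to_cconf_force_deriv:
  assumes "\<forall>i j. i \<noteq> j \<longrightarrow> x$i \<noteq> x$j"
  shows "to_cconf (force_deriv m e x h) i = (\<Sum>j\<in>UNIV - {i}.
     of_real ((m$i * m$j - e$i * e$j) / (m$i * cmod (to_cconf x j - to_cconf x i) ^ 3))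
     * (- (to_cconf h j - to_cconf h i) / 2
        - 3/2 * ((to_cconf x j - to_cconf x i) / cnj (to_cconf x j - to_cconf x i))
          * cnj (to_cconf h j - to_cconf h i)))"
  unfolding to_cconf_def force_deriv_def vec_lambda_beta complex_of_vec_scaleR complex_of_vec_sum
    sum_distrib_left
proof (rule sum.cong)
  fix j assume "j \<in> UNIV - {i}"
  then have "x$j - x$i \<noteq> 0" using assms by auto
  then show "of_real (1 / m$i) * (of_real (m$i * m$j - e$i * e$j) *
      complex_of_vec ((1 / norm (x$j - x$i) ^ 3) *\<^sub>R (h$j - h$i)
       - (3 * ((x$j - x$i) \<bullet> (h$j - h$i)) / norm (x$j - x$i) ^ 5) *\<^sub>R (x$j - x$i)))
    = of_real ((m$i * m$j - e$i * e$j) / (m$i * cmod (complex_of_vec (x$j) - complex_of_vec (x$i)) ^ 3))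
      * (- (complex_of_vec (h$j) - complex_of_vec (h$i)) / 2
        - 3/2 * ((complex_of_vec (x$j) - complex_of_vec (x$i)) / cnj (complex_of_vec (x$j) - complex_of_vec (x$i)))
          * cnj (complex_of_vec (h$j) - complex_of_vec (h$i)))"
    unfolding complex_of_vec_inverse_cube_deriv[OF \<open>x$j - x$i \<noteq> 0\<close>]
    unfolding norm_complex_of_vec[symmetric] complex_of_vec_diff by simp
qed simp

lemma of_cconf_scaled_distinct:
  assumes "z \<noteq> 0" "\<forall>i j. i \<noteq> j \<longrightarrow> A i \<noteq> A j"
  shows "\<forall>i j. i \<noteq> j \<longrightarrow> of_cconf (\<lambda>i. z * A i) $ i \<noteq> of_cconf (\<lambda>i. z * A i) $ j"
  using assms by (metis mult_left_cancel of_cconf_nth complex_of_vec_of_complex)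

lemma linearized_field_sum:
  "linearized_field m A \<omega> H i = (\<Sum>j\<in>UNIV. of_real (m$j) *
     (- (H j - H i) / 2 - 3/2 * ((A j - A i) / cnj (A j - A i)) * \<omega> * cnj (H j - H i)))"
proof -
  have "- (1/2) * (\<Sum>j\<in>UNIV. c j * W j) - (3/2) * \<omega> * (\<Sum>j\<in>UNIV. c j * q j * cW j) =
     (\<Sum>j\<in>UNIV. c j * (- (W j) / 2 - 3/2 * q j * \<omega> * cW j))" for c W q cW :: "3 \<Rightarrow> complex"
    unfolding sum_3 by (simp add: algebra_simps)
  from this[of "\<lambda>j. of_real (m$j)" "\<lambda>j. H j - H i" "\<lambda>j. (A j - A i) / cnj (A j - A i)"
      "\<lambda>j. cnj (H j - H i)"]
  show ?thesis unfolding linearized_field_def mass_laplacian_def twisted_laplacian_def by simp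
qed

lemma force_deriv_along_scaled:
  assumes z: "z \<noteq> 0" and m: "\<forall>i. m$i > 0" and nt: "newtonian_along m e A \<kappa>"
    and dist: "\<forall>i j. i \<noteq> j \<longrightarrow> A i \<noteq> A j"
  shows "to_cconf (force_deriv m e (of_cconf (\<lambda>i. z * A i)) h)
       = (\<lambda>i. of_real (\<kappa> / cmod z ^ 3) * linearized_field m A (z / cnj z) (to_cconf h) i)"
proof (rule ext)
  fix i
  let ?H = "to_cconf h"
  have "to_cconf (force_deriv m e (of_cconf (\<lambda>i. z * A i)) h) i
      = (\<Sum>j\<in>UNIV - {i}. of_real (\<kappa> / cmod z ^ 3) * (of_real (m$j) *
          (- (?H j - ?H i) / 2 - 3/2 * ((A j - A i) / cnj (A j - A i)) * (z / cnj z) * cnj (?H j - ?H i))))"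
    unfolding to_cconf_force_deriv[OF of_cconf_scaled_distinct[OF z dist]] to_cconf_of_cconf
  proof (rule sum.cong)
    fix j assume "j \<in> UNIV - {i}"
    then have "i \<noteq> j" by auto
    then have k: "m$i * m$j - e$i * e$j = m$i * m$j * \<kappa> * cmod (A j - A i) ^ 3"
      by (rule newtonian_alongD[OF nt])
    have "A j - A i \<noteq> 0" using dist \<open>i \<noteq> j\<close> by auto
    moreover have "m$i \<noteq> 0" using m by (metis less_irrefl)
    moreover have "cmod (z * A j - z * A i) = cmod z * cmod (A j - A i)"
      by (metis norm_mult right_diff_distrib)
    moreover have "(z * A j - z * A i) / cnj (z * A j - z * A i) = (A j - A i) / cnj (A j - A i) * (z / cnj z)"
      by (simp add: right_diff_distrib[symmetric] mult.commute)
    ultimately show "of_real ((m$i * m$j - e$i * e$j) / (m$i * cmod (z * A j - z * A i) ^ 3))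
        * (- (?H j - ?H i) / 2 - 3/2 * ((z * A j - z * A i) / cnj (z * A j - z * A i)) * cnj (?H j - ?H i))
      = of_real (\<kappa> / cmod z ^ 3) * (of_real (m$j) *
          (- (?H j - ?H i) / 2 - 3/2 * ((A j - A i) / cnj (A j - A i)) * (z / cnj z) * cnj (?H j - ?H i)))"
      unfolding k using z by (simp add: field_simps power_mult_distrib)
  qed simp
  also have "\<dots> = of_real (\<kappa> / cmod z ^ 3) * linearized_field m A (z / cnj z) ?H i"
    unfolding linearized_field_sum sum_distrib_left[symmetric]
    by (subst sum_remove_zero) (simp_all add: mult.commute mult.left_commute)
  finally show "to_cconf (force_deriv m e (of_cconf (\<lambda>i. z * A i)) h) i
      = of_real (\<kappa> / cmod z ^ 3) * linearized_field m A (z / cnj z) ?H i" .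
qed

section \<open>Non-collinear central configurations\<close>

lemma collinear_if_Im_zero:
  fixes x y z :: "real^2"
  assumes "Im (cnj (complex_of_vec y - complex_of_vec x) * (complex_of_vec z - complex_of_vec x)) = 0"
  shows "collinear {x, y, z}"
proof -
  define X where "X = complex_of_vec (y - x)"
  define Y where "Y = complex_of_vec (z - x)"
  have "collinear {0, y - x, z - x}"
  proof (cases "X = 0")
    case True
    then show ?thesis unfolding X_def by (simp add: complex_of_vec_zero[symmetric] complex_of_vec_inject collinear_lemma)
  next
    case False
    have real: "cnj X * Y = of_real (Re (cnj X * Y))"
      using assms unfolding X_def Y_def complex_of_vec_diff by (simp add: complex_eq_iff)
    have "of_real ((cmod X)\<^sup>2) * Y = X * (cnj X * Y)"
      unfolding complex_norm_square by (simp add: mult.assoc)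
    also have "\<dots> = of_real (Re (cnj X * Y)) * X" using real by (metis mult.commute)
    finally have "Y = of_real (Re (cnj X * Y) / (cmod X)\<^sup>2) * X"
      using False by (simp add: field_simps)
    then have "z - x = (Re (cnj X * Y) / (cmod X)\<^sup>2) *\<^sub>R (y - x)"
      unfolding X_def Y_def by (metis complex_of_vec_scaleR complex_of_vec_inject)
    then show ?thesis unfolding collinear_lemma by blast
  qed
  then have "collinear {y, x, z}" by (subst collinear_3) auto
  then show ?thesis by (simp add: insert_commute)
qed

lemma noncollinear_Im_nonzero:
  fixes a :: conf
  assumes "\<not> collinear {a$1, a$2, a$3}" "i \<noteq> j" "i \<noteq> k" "j \<noteq> k"
  shows "Im (cnj (to_cconf a j - to_cconf a i) * (to_cconf a k - to_cconf a i)) \<noteq> 0"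
proof
  assume "Im (cnj (to_cconf a j - to_cconf a i) * (to_cconf a k - to_cconf a i)) = 0"
  then have "collinear {a$i, a$j, a$k}" unfolding to_cconf_def by (rule collinear_if_Im_zero)
  moreover have "{a$i, a$j, a$k} = {a$1, a$2, a$3}"
    using assms(2-4) exhaust_3[of i] exhaust_3[of j] exhaust_3[of k] by (elim disjE) auto
  ultimately show False using assms(1) by simp
qed

lemma real_combination_eq_zero:
  fixes \<alpha> \<beta> :: real
  assumes "of_real \<alpha> * X + of_real \<beta> * Y = 0" "Im (cnj X * Y) \<noteq> 0"
  shows "\<alpha> = 0 \<and> \<beta> = 0"
proof -
  have "of_real (\<alpha> * (cmod X)\<^sup>2) + of_real \<beta> * (cnj X * Y) = cnj X * (of_real \<alpha> * X + of_real \<beta> * Y)"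
    unfolding of_real_mult complex_norm_square by (simp add: algebra_simps)
  then have "of_real (\<alpha> * (cmod X)\<^sup>2) + of_real \<beta> * (cnj X * Y) = 0"
    using assms(1) by simp
  then have "Im (of_real (\<alpha> * (cmod X)\<^sup>2) + of_real \<beta> * (cnj X * Y)) = 0" by simp
  then have "\<beta> * Im (cnj X * Y) = 0" by simp
  then have "\<beta> = 0" using assms(2) by simp
  moreover have "X \<noteq> 0" using assms(2) by auto
  ultimately show ?thesis using assms(1) by simp
qed

lemma complex_of_vec_center_of_mass:
  "complex_of_vec (center_of_mass m a) = centre m (to_cconf a)"
  unfolding center_of_mass_def centre_def total_mass_def to_cconf_def
  by (simp add: complex_of_vec_scaleR complex_of_vec_add sum_3 divide_inverse mult.commute)

lemma other_two_indices:
  fixes i j :: 3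
  assumes "i \<noteq> j"
  obtains k where "k \<noteq> i" "k \<noteq> j" "UNIV - {i} = {j, k}" "UNIV = {i, j, k}"
proof -
  have "\<not> UNIV \<subseteq> {i, j}"
    using card_mono[of "{i, j}" UNIV] card_insert_le[of "{j}" i] by (auto simp: card_insert_if split: if_splits)
  then obtain k where k: "k \<noteq> i" "k \<noteq> j" by blast
  have "card {i, j, k} = CARD(3)" using assms k by simp
  then have "{i, j, k} = UNIV" by (intro card_subset_eq) auto
  then show ?thesis using that k assms by blast
qed

text \<open>At vertex $i$ the central configuration equation says that
  $-\lambda (A_i - c) = \frac{\lambda}{M}\sum_j m_j (A_j - A_i)$ is a real combination of the two
  sides at $i$; these are independent, so the coefficients can be read off.\<close>
lemma central_config_coefficients:
  assumes "UNIV = {i, j, k}" "j \<noteq> k" "total_mass m \<noteq> 0"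
    and indep: "Im (cnj (A j - A i) * (A k - A i)) \<noteq> 0"
    and eq: "of_real cj * (A j - A i) + of_real ck * (A k - A i) = - of_real lam * (A i - centre m A)"
  shows "cj = lam * m$j / total_mass m"
proof -
  let ?M = "complex_of_real (total_mass m)"
  have M: "?M \<noteq> 0" using assms(3) by simp
  have "i \<noteq> j" "i \<noteq> k" using indep by auto
  have "- (of_real (m$j) * (A j - A i) + of_real (m$k) * (A k - A i))
      = (\<Sum>n\<in>UNIV. of_real (m$n) * (A i - A n))"
    unfolding assms(1) using \<open>i \<noteq> j\<close> \<open>i \<noteq> k\<close> assms(2) by (simp add: algebra_simps)
  also have "\<dots> = ?M * A i - (\<Sum>n\<in>UNIV. of_real (m$n) * A n)"
    by (simp add: sum_3 total_mass_def algebra_simps)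
  also have "\<dots> = ?M * (A i - centre m A)"
    unfolding centre_def using M by (simp add: field_simps)
  finally have c: "A i - centre m A = - (of_real (m$j) * (A j - A i) + of_real (m$k) * (A k - A i)) / ?M"
    using M by (simp add: eq_divide_eq mult.commute)
  have "of_real (cj - lam * m$j / total_mass m) * (A j - A i)
      + of_real (ck - lam * m$k / total_mass m) * (A k - A i)
      = of_real cj * (A j - A i) + of_real ck * (A k - A i) + of_real lam * (A i - centre m A)"
    unfolding c using M by (simp add: field_simps)
  also have "\<dots> = 0" using eq by simp
  finally have "of_real (cj - lam * m$j / total_mass m) * (A j - A i)
      + of_real (ck - lam * m$k / total_mass m) * (A k - A i) = 0" .
  from real_combination_eq_zero[OF this indep] show ?thesis by simp
qed

lemma central_config_newtonian:
  fixes m e :: "real^3" and a :: conf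
  assumes m: "\<forall>i. m$i > 0" and dp: "\<forall>i j. i \<noteq> j \<longrightarrow> delta m e i j > 0"
    and cc: "central_config m e a" and nc: "\<not> collinear {a$1, a$2, a$3}"
  obtains \<kappa> where "\<kappa> > 0" "newtonian_along m e (to_cconf a) \<kappa>"
proof -
  define A where "A = to_cconf a"
  define M where "M = total_mass m"
  obtain lam where lam: "\<forall>i. force m e a $ i = (- lam) *\<^sub>R (a$i - center_of_mass m a)"
    using cc unfolding central_config_def by blast
  have "M > 0" using m unfolding M_def total_mass_def by (simp add: add_pos_pos)
  have mnz: "m$i \<noteq> 0" for i using m by (metis less_irrefl)
  have coeff: "m$i * m$j - e$i * e$j = m$i * m$j * (lam / M) * cmod (A j - A i) ^ 3" if ij: "i \<noteq> j" for i j
  proof -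
    obtain k where k: "k \<noteq> i" "k \<noteq> j" "UNIV - {i} = {j, k}" "UNIV = {i, j, k}"
      using other_two_indices[OF ij] .
    have indep: "Im (cnj (A j - A i) * (A k - A i)) \<noteq> 0"
      unfolding A_def using noncollinear_Im_nonzero[OF nc ij not_sym[OF k(1)] not_sym[OF k(2)]] .
    then have "A j \<noteq> A i" by auto
    define c where "c n = 1 / m$i * ((m$i * m$n - e$i * e$n) / cmod (A n - A i) ^ 3)" for n
    have "of_real (c j) * (A j - A i) + of_real (c k) * (A k - A i) = to_cconf (force m e a) i"
      unfolding to_cconf_force k(3) c_def A_def using k(2) by simp
    also have "\<dots> = - of_real lam * (A i - centre m A)"
      using lam unfolding A_def to_cconf_def
      by (simp add: complex_of_vec_scaleR complex_of_vec_diff complex_of_vec_minus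
          complex_of_vec_center_of_mass[unfolded to_cconf_def])
    finally have "c j = lam * m$j / M"
      unfolding M_def using \<open>M > 0\<close> k(2)
      by (intro central_config_coefficients[OF k(4) _ _ indep]) (auto simp: M_def)
    have "m$i * m$j - e$i * e$j = m$i * cmod (A j - A i) ^ 3 * c j"
      unfolding c_def using mnz[of i] \<open>A j \<noteq> A i\<close> by simp
    also have "\<dots> = m$i * m$j * (lam / M) * cmod (A j - A i) ^ 3"
      unfolding \<open>c j = lam * m$j / M\<close> by simp
    finally show ?thesis .
  qed
  have "m$1 * m$2 - e$1 * e$2 = m$1 * m$2 * delta m e 1 2"
    unfolding delta_def using mnz[of 1] mnz[of 2] by (simp add: field_simps)
  also have "\<dots> > 0" using m dp by simp
  finally have "lam / M * (m$1 * m$2 * cmod (A 2 - A 1) ^ 3) > 0"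
    using coeff[of 1 2] by (simp add: ac_simps)
  moreover have "A 2 \<noteq> A 1"
    using noncollinear_Im_nonzero[OF nc, of 1 2 3] unfolding A_def by auto
  then have "m$1 * m$2 * cmod (A 2 - A 1) ^ 3 > 0" using m by simp
  ultimately have "lam / M > 0" by (rule zero_less_mult_pos2)
  moreover have "newtonian_along m e A (lam / M)"
    unfolding newtonian_along_def by (intro allI impI coeff)
  ultimately show ?thesis using that unfolding A_def by blast
qed

section \<open>The mass parameter\<close>

definition sin_sq_angle :: "complex \<Rightarrow> complex \<Rightarrow> real" where
  "sin_sq_angle X Y = (Im (cnj X * Y))\<^sup>2 / (cmod (cnj X * Y))\<^sup>2"

definition sq_phase :: "complex \<Rightarrow> complex" where
  "sq_phase X = X / cnj X"

lemma sin_sq_angle_commute: "sin_sq_angle X Y = sin_sq_angle Y X"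
proof -
  have e: "cnj Y * X = cnj (cnj X * Y)" by simp
  show ?thesis unfolding sin_sq_angle_def e by (simp add: power2_commute norm_mult)
qed

lemma sin_sq_angle_minus_right: "sin_sq_angle X (- Y) = sin_sq_angle X Y"
  and sin_sq_angle_minus_left: "sin_sq_angle (- X) Y = sin_sq_angle X Y"
  unfolding sin_sq_angle_def by (simp_all add: power2_commute)

lemma sin_sq_angle_nonneg: "sin_sq_angle X Y \<ge> 0"
  unfolding sin_sq_angle_def by simp

lemma sin_sq_angle_pos: "Im (cnj X * Y) \<noteq> 0 \<Longrightarrow> sin_sq_angle X Y > 0"
  unfolding sin_sq_angle_def by (auto intro!: divide_pos_pos)

lemma sin_arccos_sq:
  assumes "w \<noteq> 0"
  shows "(sin (arccos (Re w / cmod w)))\<^sup>2 = (Im w)\<^sup>2 / (cmod w)\<^sup>2"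
proof -
  have c: "cmod w > 0" using assms by simp
  have "\<bar>Re w\<bar> \<le> cmod w" by (rule abs_Re_le_cmod)
  then have b: "- 1 \<le> Re w / cmod w" "Re w / cmod w \<le> 1"
    using c by (auto simp: field_simps abs_le_iff)
  have "(Re w / cmod w)\<^sup>2 \<le> 1" using b by (simp add: abs_square_le_1 abs_le_iff)
  then have "(sin (arccos (Re w / cmod w)))\<^sup>2 = 1 - (Re w / cmod w)\<^sup>2"
    using sin_arccos[OF b] by simp
  also have "\<dots> = (Im w)\<^sup>2 / (cmod w)\<^sup>2"
  proof -
    have "(cmod w)\<^sup>2 \<noteq> 0" using c by simp
    moreover have "(cmod w)\<^sup>2 = (Re w)\<^sup>2 + (Im w)\<^sup>2" by (rule cmod_power2)
    ultimately show ?thesis by (simp add: field_simps power_divide)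
  qed
  finally show ?thesis .
qed

lemma sin_inner_angle_sq:
  fixes a :: conf
  assumes "a$i \<noteq> a$k" "a$j \<noteq> a$k"
  shows "(sin (inner_angle a k i j))\<^sup>2 = sin_sq_angle (to_cconf a i - to_cconf a k) (to_cconf a j - to_cconf a k)"
proof -
  define w where "w = cnj (to_cconf a i - to_cconf a k) * (to_cconf a j - to_cconf a k)"
  have "w \<noteq> 0"
    using assms unfolding w_def to_cconf_def by (simp add: complex_of_vec_inject)
  moreover have "(a$i - a$k) \<bullet> (a$j - a$k) = Re w"
    unfolding w_def to_cconf_def inner_complex_of_vec complex_of_vec_diff ..
  moreover have "norm (a$i - a$k) * norm (a$j - a$k) = cmod w"
    unfolding w_def to_cconf_def
    by (simp add: norm_mult norm_complex_of_vec[symmetric] complex_of_vec_diff del: complex_cnj_diff)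
  ultimately show ?thesis
    unfolding sin_sq_angle_def w_def[symmetric] inner_angle_def using sin_arccos_sq by simp
qed

lemma Re_sq_phase_product:
  assumes "X \<noteq> 0" "Y \<noteq> 0"
  shows "Re (sq_phase X * cnj (sq_phase Y)) = 1 - 2 * sin_sq_angle X Y"
proof -
  define w where "w = cnj X * Y"
  have "w \<noteq> 0" using assms unfolding w_def by simp
  then have "(Re w)\<^sup>2 + (Im w)\<^sup>2 \<noteq> 0" by (simp add: complex_eq_iff power2_eq_square)
  then have "Re (cnj w / w) = 1 - 2 * (Im w)\<^sup>2 / (cmod w)\<^sup>2"
    unfolding Re_divide cmod_power2 by (simp add: field_simps power2_eq_square)
  moreover have "sq_phase X * cnj (sq_phase Y) = cnj w / w"
    unfolding sq_phase_def w_def by (simp add: field_simps)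
  ultimately show ?thesis unfolding sin_sq_angle_def w_def[symmetric] by simp
qed

lemma norm_mass_sum_sq_phase:
  fixes m1 m2 m3 :: real
  assumes "X1 \<noteq> 0" "X2 \<noteq> 0" "X3 \<noteq> 0"
  shows "(cmod (of_real m1 * sq_phase X1 + of_real m2 * sq_phase X2 + of_real m3 * sq_phase X3))\<^sup>2 =
     (m1 + m2 + m3)\<^sup>2 - 4 * (m1 * m2 * sin_sq_angle X1 X2 + m1 * m3 * sin_sq_angle X1 X3
       + m2 * m3 * sin_sq_angle X2 X3)"
proof -
  define S where "S = of_real m1 * sq_phase X1 + of_real m2 * sq_phase X2 + of_real m3 * sq_phase X3"
  define p12 where "p12 = sq_phase X1 * cnj (sq_phase X2)"
  define p13 where "p13 = sq_phase X1 * cnj (sq_phase X3)"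
  define p23 where "p23 = sq_phase X2 * cnj (sq_phase X3)"
  have unit: "sq_phase X * cnj (sq_phase X) = 1" if "X \<noteq> 0" for X
    using that unfolding sq_phase_def by (simp add: field_simps)
  have "(cmod S)\<^sup>2 = Re (S * cnj S)"
    by (metis Re_complex_of_real complex_norm_square)
  also have "S * cnj S = of_real (m1^2) * (sq_phase X1 * cnj (sq_phase X1))
      + of_real (m2^2) * (sq_phase X2 * cnj (sq_phase X2)) + of_real (m3^2) * (sq_phase X3 * cnj (sq_phase X3))
      + of_real (m1*m2) * (p12 + cnj p12) + of_real (m1*m3) * (p13 + cnj p13) + of_real (m2*m3) * (p23 + cnj p23)"
    unfolding S_def p12_def p13_def p23_def by (simp add: algebra_simps power2_eq_square)
  also have "\<dots> = of_real (m1^2 + m2^2 + m3^2) + of_real (m1*m2) * (p12 + cnj p12)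
      + of_real (m1*m3) * (p13 + cnj p13) + of_real (m2*m3) * (p23 + cnj p23)"
    using unit assms by simp
  also have "Re \<dots> = m1^2 + m2^2 + m3^2 + 2 * m1 * m2 * Re p12 + 2 * m1 * m3 * Re p13 + 2 * m2 * m3 * Re p23"
    by simp
  also have "\<dots> = (m1 + m2 + m3)\<^sup>2 - 4 * (m1 * m2 * sin_sq_angle X1 X2 + m1 * m3 * sin_sq_angle X1 X3
       + m2 * m3 * sin_sq_angle X2 X3)"
    unfolding p12_def p13_def p23_def Re_sq_phase_product[OF assms(1,2)]
      Re_sq_phase_product[OF assms(1,3)] Re_sq_phase_product[OF assms(2,3)]
    by (simp add: power2_eq_square algebra_simps)
  finally show ?thesis unfolding S_def .
qed

lemma norm_twist_constant:
  assumes "weighted_triangle m A"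
  shows "cmod (twist_constant m A) = cmod (of_real (m$1) * sq_phase (A 3 - A 2)
     + of_real (m$2) * sq_phase (A 1 - A 3) + of_real (m$3) * sq_phase (A 2 - A 1))"
proof -
  define P where "P = (A 2 - A 1) * (A 3 - A 2) * (A 1 - A 3)"
  define S where "S = of_real (m$1) * sq_phase (A 3 - A 2) + of_real (m$2) * sq_phase (A 1 - A 3)
     + of_real (m$3) * sq_phase (A 2 - A 1)"
  have "P \<noteq> 0" using assms unfolding P_def weighted_triangle_def by auto
  have "twist_constant m A = - cnj S * (P / cnj P)"
    unfolding twist_constant_def twist_def sq_phase_def P_def S_def by simp
  moreover have "cmod (P / cnj P) = 1" using \<open>P \<noteq> 0\<close> by (simp add: norm_divide)
  ultimately have "cmod (twist_constant m A) = cmod S"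
    by (simp only: norm_mult norm_minus_cancel complex_mod_cnj mult_1_right)
  then show ?thesis unfolding S_def .
qed

lemma beta_sin_sq_angles:
  fixes m :: "real^3" and a :: conf
  assumes "weighted_triangle m (to_cconf a)"
  defines "A \<equiv> to_cconf a"
  shows "beta m a = 36 * (m$1 * m$2 * sin_sq_angle (A 3 - A 2) (A 1 - A 3)
       + m$1 * m$3 * sin_sq_angle (A 3 - A 2) (A 2 - A 1)
       + m$2 * m$3 * sin_sq_angle (A 1 - A 3) (A 2 - A 1)) / (m$1 + m$2 + m$3)^2"
proof -
  have d: "a$i \<noteq> a$j" if "i \<noteq> j" for i j
    using weighted_triangle_distinct[OF assms(1) that] unfolding to_cconf_def by auto
  have "(sin (inner_angle a 3 1 2))\<^sup>2 = sin_sq_angle (A 1 - A 3) (- (A 3 - A 2))"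
    using sin_inner_angle_sq[of a 1 3 2] d[of 1 3] d[of 2 3] unfolding A_def by simp
  moreover have "(sin (inner_angle a 2 1 3))\<^sup>2 = sin_sq_angle (- (A 2 - A 1)) (A 3 - A 2)"
    using sin_inner_angle_sq[of a 1 2 3] d[of 1 2] d[of 3 2] unfolding A_def by simp
  moreover have "(sin (inner_angle a 1 2 3))\<^sup>2 = sin_sq_angle (A 2 - A 1) (- (A 1 - A 3))"
    using sin_inner_angle_sq[of a 2 1 3] d[of 2 1] d[of 3 1] unfolding A_def by simp
  ultimately show ?thesis
    unfolding beta_def by (simp only: sin_sq_angle_minus_left sin_sq_angle_minus_right sin_sq_angle_commute)
qed

lemma beta_eq_twist_constant:
  fixes m :: "real^3" and a :: conf
  assumes "weighted_triangle m (to_cconf a)"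
  shows "beta m a = 9 * ((total_mass m)\<^sup>2 - (cmod (twist_constant m (to_cconf a)))\<^sup>2) / (total_mass m)\<^sup>2"
proof -
  have "to_cconf a i \<noteq> to_cconf a j" if "i \<noteq> j" for i j
    using weighted_triangle_distinct[OF assms that] .
  then show ?thesis
    unfolding beta_sin_sq_angles[OF assms] norm_twist_constant[OF assms] total_mass_def
    by (subst norm_mass_sum_sq_phase) (auto simp: field_simps)
qed

lemma beta_pos:
  fixes m :: "real^3" and a :: conf
  assumes "weighted_triangle m (to_cconf a)" "\<not> collinear {a$1, a$2, a$3}"
  shows "beta m a > 0"
proof -
  define A where "A = to_cconf a"
  have m: "m$i > 0" for i using weighted_triangle_mass_pos[OF assms(1)] .
  have "Im (cnj (A 3 - A 2) * (A 1 - A 3)) = - Im (cnj (A 2 - A 3) * (A 1 - A 3))"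
    by (simp add: algebra_simps)
  also have "\<dots> \<noteq> 0" using noncollinear_Im_nonzero[OF assms(2), of 3 2 1] unfolding A_def by simp
  finally have "m$1 * m$2 * sin_sq_angle (A 3 - A 2) (A 1 - A 3) > 0"
    using m[of 1] m[of 2] by (simp add: sin_sq_angle_pos)
  moreover have "m$1 * m$3 * sin_sq_angle (A 3 - A 2) (A 2 - A 1) \<ge> 0"
    "m$2 * m$3 * sin_sq_angle (A 1 - A 3) (A 2 - A 1) \<ge> 0"
    using m[of 1] m[of 2] m[of 3] by (simp_all add: sin_sq_angle_nonneg)
  moreover have "m$1 + m$2 + m$3 > 0" using m[of 1] m[of 2] m[of 3] by simp
  ultimately show ?thesis
    unfolding beta_sin_sq_angles[OF assms(1)] A_def[symmetric] by (intro divide_pos_pos) auto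
qed

section \<open>Equilateral partners\<close>

definition equilateral_cconf :: "real \<Rightarrow> cconf" where
  "equilateral_cconf s i = (if i = 1 then 0 else if i = 2 then of_real s else of_real s * cis (pi / 3))"

definition equilateral_masses :: "real \<Rightarrow> real \<Rightarrow> real^3" where
  "equilateral_masses M x = vector [M / (2 + x), M / (2 + x), M * x / (2 + x)]"

lemma equilateral_cconf_simps:
  "equilateral_cconf s 1 = 0" "equilateral_cconf s 2 = of_real s"
  "equilateral_cconf s 3 = of_real s * cis (pi / 3)"
  unfolding equilateral_cconf_def by simp_all

lemma equilateral_masses_simps:
  "equilateral_masses M x $ 1 = M / (2 + x)" "equilateral_masses M x $ 2 = M / (2 + x)"
  "equilateral_masses M x $ 3 = M * x / (2 + x)"
  unfolding equilateral_masses_def by simp_all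

lemma cis_pi_third: "cis (pi / 3) = Complex (1/2) (sqrt 3 / 2)"
  by (simp add: complex_eq_iff cos_60 sin_60)

lemma norm_cis_pi_third_minus_one: "cmod (cis (pi / 3) - 1) = 1"
  unfolding cis_pi_third cmod_def by (simp add: power2_eq_square)

lemma dist_equilateral_cconf:
  assumes "s > 0" "i \<noteq> j"
  shows "cmod (equilateral_cconf s j - equilateral_cconf s i) = s"
proof -
  have "of_real s * cis (pi / 3) - of_real s = of_real s * (cis (pi / 3) - 1)"
    by (simp add: algebra_simps)
  then have a: "cmod (of_real s * cis (pi / 3) - of_real s) = s"
    using assms(1) norm_cis_pi_third_minus_one by (simp add: norm_mult)
  then have b: "cmod (of_real s - of_real s * cis (pi / 3)) = s"
    by (metis norm_minus_commute)
  have c: "cmod (of_real s * cis (pi / 3)) = s" using assms(1) by (simp add: norm_mult)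
  show ?thesis using exhaust_3[of i] exhaust_3[of j] assms a b c
    by (elim disjE) (simp_all add: equilateral_cconf_simps norm_minus_commute)
qed

lemma weighted_triangle_equilateral:
  assumes "s > 0" "M > 0" "x > 0"
  shows "weighted_triangle (equilateral_masses M x) (equilateral_cconf s)"
proof -
  have "equilateral_cconf s i \<noteq> equilateral_cconf s j" if "i \<noteq> j" for i j
    using dist_equilateral_cconf[OF assms(1) that] assms(1) by auto
  moreover have "equilateral_masses M x $ i > 0" for i
    using assms exhaust_3[of i] by (auto simp: equilateral_masses_simps)
  ultimately show ?thesis unfolding weighted_triangle_def by simp
qed

lemma total_mass_equilateral_masses:
  assumes "x > 0"
  shows "total_mass (equilateral_masses M x) = M"
proof -
  have "M / (2 + x) + M / (2 + x) + M * x / (2 + x) = M * (2 + x) / (2 + x)"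
    by (simp add: add_divide_distrib[symmetric] algebra_simps)
  then show ?thesis unfolding total_mass_def equilateral_masses_simps using assms by simp
qed

lemma sq_phase_scale: "s > 0 \<Longrightarrow> sq_phase (of_real s * w) = sq_phase w"
  unfolding sq_phase_def by (cases "w = 0") simp_all

lemma norm_twist_constant_equilateral:
  assumes "s > 0" "M > 0" "x \<ge> 1"
  shows "cmod (twist_constant (equilateral_masses M x) (equilateral_cconf s)) = M * (x - 1) / (2 + x)"
proof -
  have s3: "sqrt 3 * sqrt 3 = (3::real)" by simp
  have p1: "sq_phase (cis (pi / 3) - 1) = Complex (-1/2) (- sqrt 3 / 2)"
    and p2: "sq_phase (- cis (pi / 3)) = Complex (-1/2) (sqrt 3 / 2)"
    and p3: "sq_phase 1 = 1"
    unfolding sq_phase_def cis_pi_third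
    by (simp_all add: complex_eq_iff Re_divide Im_divide power2_eq_square s3 field_simps)
  have e1: "equilateral_cconf s 3 - equilateral_cconf s 2 = of_real s * (cis (pi / 3) - 1)"
    and e2: "equilateral_cconf s 1 - equilateral_cconf s 3 = of_real s * (- cis (pi / 3))"
    and e3: "equilateral_cconf s 2 - equilateral_cconf s 1 = of_real s * 1"
    unfolding equilateral_cconf_simps by (simp_all add: algebra_simps)
  define c where "c = M / (2 + x)"
  have c3: "M * x / (2 + x) = c * x" and cx: "M * (x - 1) / (2 + x) = c * (x - 1)"
    unfolding c_def by simp_all
  have "of_real (equilateral_masses M x $ 1) * sq_phase (equilateral_cconf s 3 - equilateral_cconf s 2)
      + of_real (equilateral_masses M x $ 2) * sq_phase (equilateral_cconf s 1 - equilateral_cconf s 3)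
      + of_real (equilateral_masses M x $ 3) * sq_phase (equilateral_cconf s 2 - equilateral_cconf s 1)
      = of_real (M * (x - 1) / (2 + x))"
    unfolding e1 e2 e3 sq_phase_scale[OF assms(1)] p1 p2 p3 equilateral_masses_simps c3 cx
      c_def[symmetric]
    by (simp add: complex_eq_iff algebra_simps)
  then have "cmod (twist_constant (equilateral_masses M x) (equilateral_cconf s))
      = cmod (complex_of_real (M * (x - 1) / (2 + x)))"
    using assms norm_twist_constant[OF weighted_triangle_equilateral] by simp
  also have "\<dots> = M * (x - 1) / (2 + x)" using assms by (simp only: norm_of_real) simp
  finally show ?thesis .
qed

lemma centre_centred: "total_mass m \<noteq> 0 \<Longrightarrow> centre m (centred m A) = 0"
  unfolding centre_def by (simp add: mass_moment_centred)

lemma centred_centred: "total_mass m \<noteq> 0 \<Longrightarrow> centred m (centred m A) = centred m A"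
  by (simp add: fun_eq_iff centred_def[of m "centred m A"] centre_centred)

lemma weighted_triangle_centred: "weighted_triangle m A \<Longrightarrow> weighted_triangle m (centred m' A)"
  unfolding weighted_triangle_def centred_def by auto

lemma twist_constant_centred: "twist_constant m (centred m' A) = twist_constant m A"
  unfolding twist_constant_def twist_def centred_def by simp

text \<open>The masses $(1, 1, x)$, rescaled to total mass $M$, on an equilateral triangle realise every
  value $|s| = M (x - 1)/(x + 2) \in [0, M)$ of the twist constant; the side length is chosen so
  that the Newtonian constant along the triangle is $\kappa$.\<close>
lemma equilateral_partner:
  assumes "M > 0" "0 \<le> \<sigma>" "\<sigma> < M" "\<kappa> > 0"
  obtains m' :: "real^3" and a' :: conf where
    "weighted_triangle m' (to_cconf a')" "equilateral a'" "total_mass m' = M"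
    "centred m' (to_cconf a') = to_cconf a'" "cmod (twist_constant m' (to_cconf a')) = \<sigma>"
    "newtonian_along m' 0 (to_cconf a') \<kappa>"
proof -
  define \<rho> where "\<rho> = \<sigma> / M"
  have \<rho>: "0 \<le> \<rho>" "\<rho> < 1" unfolding \<rho>_def using assms by simp_all
  define x where "x = (1 + 2 * \<rho>) / (1 - \<rho>)"
  have "x \<ge> 1" unfolding x_def using \<rho> by (simp add: field_simps)
  have x1: "x - 1 = 3 * \<rho> / (1 - \<rho>)" and x2: "2 + x = 3 / (1 - \<rho>)"
    unfolding x_def using \<rho> by (simp_all add: field_simps)
  have "M * (x - 1) / (2 + x) = M * \<rho>" unfolding x1 x2 using \<rho> by (simp add: field_simps)
  then have x\<sigma>: "M * (x - 1) / (2 + x) = \<sigma>" unfolding \<rho>_def using assms(1) by simp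
  define s where "s = root 3 (1 / \<kappa>)"
  have "s > 0" "\<kappa> * s ^ 3 = 1" unfolding s_def using assms(4) by simp_all
  define m' where "m' = equilateral_masses M x"
  define A' where "A' = centred m' (equilateral_cconf s)"
  have tri: "weighted_triangle m' (equilateral_cconf s)"
    unfolding m'_def using weighted_triangle_equilateral \<open>s > 0\<close> assms(1) \<open>x \<ge> 1\<close> by simp
  have M: "total_mass m' = M" unfolding m'_def using \<open>x \<ge> 1\<close> by (simp add: total_mass_equilateral_masses)
  have side: "cmod (A' j - A' i) = s" if "i \<noteq> j" for i j
    unfolding A'_def centred_def using dist_equilateral_cconf[OF \<open>s > 0\<close> that] by simp
  show ?thesis
  proof (rule that[of m' "of_cconf A'"])
    show "weighted_triangle m' (to_cconf (of_cconf A'))"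
      unfolding A'_def using weighted_triangle_centred[OF tri] by simp
    show "total_mass m' = M" by (rule M)
    show "centred m' (to_cconf (of_cconf A')) = to_cconf (of_cconf A')"
      unfolding A'_def using M assms(1) by (simp add: centred_centred)
    show "cmod (twist_constant m' (to_cconf (of_cconf A'))) = \<sigma>"
      unfolding A'_def m'_def using norm_twist_constant_equilateral[OF \<open>s > 0\<close> assms(1) \<open>x \<ge> 1\<close>] x\<sigma>
      by (simp add: twist_constant_centred)
    show "newtonian_along m' 0 (to_cconf (of_cconf A')) \<kappa>"
      unfolding newtonian_along_def using side \<open>\<kappa> * s ^ 3 = 1\<close> by (simp add: mult.assoc)
    have "norm (of_cconf A' $ i - of_cconf A' $ j) = s" if "i \<noteq> j" for i j
      using side[OF that[symmetric]]
      by (metis complex_of_vec_diff norm_complex_of_vec of_cconf_nth complex_of_vec_of_complex)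
    then show "equilateral (of_cconf A')"
      unfolding equilateral_def using \<open>s > 0\<close> by simp
  qed
qed

section \<open>Conjugating the linearised systems\<close>

lemma exists_conj_balancing:
  fixes s1 s2 :: complex
  assumes "cmod s1 = cmod s2"
  obtains \<tau> where "\<tau> \<noteq> 0" "\<tau> * s1 = cnj \<tau> * s2"
proof (cases "s1 = 0")
  case True
  then show ?thesis using assms by (intro that[of 1]) simp_all
next
  case False
  then have "s2 \<noteq> 0" using assms by auto
  define \<tau> where "\<tau> = csqrt (s2 * cnj s1)"
  have \<tau>2: "\<tau>\<^sup>2 = s2 * cnj s1" unfolding \<tau>_def by simp
  then have "\<tau> \<noteq> 0" using False \<open>s2 \<noteq> 0\<close> by auto
  have "of_real ((cmod \<tau>)\<^sup>2) = (of_real ((cmod s1)\<^sup>2) :: complex)"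
    using \<tau>2 assms by (metis norm_mult norm_power complex_mod_cnj power2_eq_square)
  then have norms: "\<tau> * cnj \<tau> = s1 * cnj s1" by (simp only: complex_norm_square)
  have "\<tau> * (\<tau> * s1) = s2 * (s1 * cnj s1)" using \<tau>2 by (simp add: power2_eq_square algebra_simps)
  also have "\<dots> = \<tau> * (cnj \<tau> * s2)" using norms by (simp add: algebra_simps)
  finally show ?thesis using \<open>\<tau> \<noteq> 0\<close> by (intro that) simp_all
qed

lemma bounded_linear_map_prod:
  "bounded_linear f \<Longrightarrow> bounded_linear g \<Longrightarrow> bounded_linear (map_prod f g)"
  unfolding map_prod_def case_prod_beta'
  by (intro bounded_linear_Pair bounded_linear_compose[OF _ bounded_linear_fst]
      bounded_linear_compose[OF _ bounded_linear_snd])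

text \<open>Along $z A$ the linearised charged field is $\kappa/|z|^3$ times the linearised Newtonian field
  of $A$; the latter is conjugated to that of $A'$ by the mode transfer, which does not depend on
  $z$ because the direction $z/\bar z$ enters both fields in the same way.\<close>
lemma linearization_conjugacy:
  assumes t: "weighted_triangle m A" and t': "weighted_triangle m' A'"
    and M: "total_mass m' = total_mass m"
    and s: "cmod (twist_constant m' A') = cmod (twist_constant m A)"
    and nt: "newtonian_along m e A \<kappa>" and nt': "newtonian_along m' e' A' \<kappa>"
  obtains \<Phi> \<Psi> :: "conf \<Rightarrow> conf" where "bounded_linear \<Phi>" "bounded_linear \<Psi>"
    "\<And>x. \<Psi> (\<Phi> x) = x" "\<And>x. \<Phi> (\<Psi> x) = x"
    "\<And>z h. z \<noteq> 0 \<Longrightarrow> \<Phi> (frechet_derivative (force m e) (at (of_cconf (\<lambda>i. z * A i))) h)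
       = frechet_derivative (force m' e') (at (of_cconf (\<lambda>i. z * A' i))) (\<Phi> h)"
proof -
  obtain \<tau> where \<tau>: "\<tau> \<noteq> 0" "\<tau> * twist_constant m A = cnj \<tau> * twist_constant m' A'"
    using exists_conj_balancing[OF s[symmetric]] .
  define \<Phi> where "\<Phi> x = of_cconf (mode_transfer m A m' A' \<tau> (to_cconf x))" for x
  define \<Psi> where "\<Psi> x = of_cconf (mode_transfer m' A' m A (1 / \<tau>) (to_cconf x))" for x
  have lin: "linear \<Phi>" "linear \<Psi>"
    unfolding \<Phi>_def \<Psi>_def by (intro linear_via_cconf mode_transfer_add mode_transfer_scale)+
  have d: "\<forall>i j. i \<noteq> j \<longrightarrow> A i \<noteq> A j" "\<forall>i j. i \<noteq> j \<longrightarrow> A' i \<noteq> A' j"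
    using weighted_triangle_distinct[OF t] weighted_triangle_distinct[OF t'] by blast+
  show ?thesis
  proof (rule that[of \<Phi> \<Psi>])
    show "bounded_linear \<Phi>" "bounded_linear \<Psi>" using lin by (simp_all add: linear_conv_bounded_linear)
    show "\<Psi> (\<Phi> x) = x" for x
      unfolding \<Phi>_def \<Psi>_def using mode_transfer_inverse[OF t t' \<tau>(1)] by simp
    show "\<Phi> (\<Psi> x) = x" for x
      unfolding \<Phi>_def \<Psi>_def using mode_transfer_inverse[OF t' t, of "1 / \<tau>"] \<tau>(1) by simp
    fix z :: complex and h assume "z \<noteq> 0"
    have m: "\<forall>i. m$i > 0" "\<forall>i. m'$i > 0"
      using weighted_triangle_mass_pos[OF t] weighted_triangle_mass_pos[OF t'] by blast+
    have "to_cconf (\<Phi> (force_deriv m e (of_cconf (\<lambda>i. z * A i)) h))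
        = mode_transfer m A m' A' \<tau> (\<lambda>i. of_real (\<kappa> / cmod z ^ 3) * linearized_field m A (z / cnj z) (to_cconf h) i)"
      unfolding \<Phi>_def to_cconf_of_cconf force_deriv_along_scaled[OF \<open>z \<noteq> 0\<close> m(1) nt d(1)] ..
    also have "\<dots> = (\<lambda>i. of_real (\<kappa> / cmod z ^ 3) * linearized_field m' A' (z / cnj z) (to_cconf (\<Phi> h)) i)"
      unfolding mode_transfer_scale mode_transfer_intertwines[OF t t' M \<tau>(2)] \<Phi>_def by simp
    also have "\<dots> = to_cconf (force_deriv m' e' (of_cconf (\<lambda>i. z * A' i)) (\<Phi> h))"
      unfolding force_deriv_along_scaled[OF \<open>z \<noteq> 0\<close> m(2) nt' d(2)] ..
    finally show "\<Phi> (frechet_derivative (force m e) (at (of_cconf (\<lambda>i. z * A i))) h)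
       = frechet_derivative (force m' e') (at (of_cconf (\<lambda>i. z * A' i))) (\<Phi> h)"
      unfolding frechet_derivative_force[OF of_cconf_scaled_distinct[OF \<open>z \<noteq> 0\<close> d(1)]]
        frechet_derivative_force[OF of_cconf_scaled_distinct[OF \<open>z \<noteq> 0\<close> d(2)]]
      by (rule to_cconf_inject)
  qed
qed

lemma similarity_transfer:
  assumes t: "weighted_triangle m A" and m': "\<forall>i. m'$i > 0"
    and M: "total_mass m' = total_mass m" and c: "centred m' A' = A'"
    and nt: "newtonian_along m e A \<kappa>" and nt': "newtonian_along m' e' A' \<kappa>"
  obtains \<Phi> :: "conf \<Rightarrow> conf" where "bounded_linear \<Phi>"
    "\<And>z. \<Phi> (of_cconf (\<lambda>i. z * A i)) = of_cconf (\<lambda>i. z * A' i)"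
    "\<And>z. z \<noteq> 0 \<Longrightarrow> \<Phi> (force m e (of_cconf (\<lambda>i. z * A i))) = force m' e' (of_cconf (\<lambda>i. z * A' i))"
proof -
  define K where "K i = A' i / (A 1 - A 2)" for i
  define \<Phi> where "\<Phi> x = of_cconf (\<lambda>i. (to_cconf x 1 - to_cconf x 2) * K i)" for x
  have A12: "A 1 - A 2 \<noteq> 0" and m: "\<forall>i. m$i > 0" using t unfolding weighted_triangle_def by simp_all
  have "total_mass m' \<noteq> 0" using M weighted_triangle_total_mass_pos[OF t] by simp
  then have "(\<Sum>i\<in>UNIV. of_real (m'$i) * A' i) = 0" using mass_moment_centred[of m' A'] c by simp
  then have lap': "mass_laplacian m' A' i = - of_real (total_mass m) * A' i" for i
    unfolding mass_laplacian_eq M by simp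
  have lap: "mass_laplacian m A i = - of_real (total_mass m) * centred m A i" for i
    using mass_laplacian_centred[OF t] unfolding mass_laplacian_translate .
  show ?thesis
  proof (rule that[of \<Phi>])
    show "bounded_linear \<Phi>" unfolding \<Phi>_def linear_conv_bounded_linear[symmetric]
      by (intro linear_via_cconf) (simp_all add: fun_eq_iff algebra_simps)
    show "\<Phi> (of_cconf (\<lambda>i. z * A i)) = of_cconf (\<lambda>i. z * A' i)" for z
    proof -
      have "(z * A 1 - z * A 2) * K i = z * A' i" for i
        unfolding K_def using A12 by (simp add: field_simps)
      then show ?thesis unfolding \<Phi>_def by simp
    qed
    fix z :: complex assume "z \<noteq> 0"
    define k where "k = of_real (\<kappa> / cmod z ^ 3) * z"
    have "(k * mass_laplacian m A 1 - k * mass_laplacian m A 2) * K i = k * mass_laplacian m' A' i" for i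
      unfolding lap lap' centred_def K_def using A12 by (simp add: field_simps)
    then show "\<Phi> (force m e (of_cconf (\<lambda>i. z * A i))) = force m' e' (of_cconf (\<lambda>i. z * A' i))"
      unfolding \<Phi>_def force_along_scaled[OF \<open>z \<noteq> 0\<close> m nt]
      by (intro to_cconf_inject)
        (simp add: force_along_scaled[OF \<open>z \<noteq> 0\<close> m' nt'] k_def fun_eq_iff)
  qed
qed

lemma is_solution_linear_image:
  assumes "bounded_linear \<Phi>" and "is_solution m e q"
    and "\<And>t. \<Phi> (force m e (q t)) = force m' e' (\<Phi> (q t))"
  shows "is_solution m' e' (\<lambda>t. \<Phi> (q t))"
proof -
  obtain v where v: "\<And>t. (q has_vector_derivative v t) (at t)"
      "\<And>t. (v has_vector_derivative force m e (q t)) (at t)"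
    using assms(2) unfolding is_solution_def by blast
  have "((\<lambda>t. \<Phi> (q t)) has_vector_derivative \<Phi> (v t)) (at t)"
    and "((\<lambda>t. \<Phi> (v t)) has_vector_derivative force m' e' (\<Phi> (q t))) (at t)" for t
    using bounded_linear.has_vector_derivative[OF assms(1) v(1)]
      bounded_linear.has_vector_derivative[OF assms(1) v(2)] assms(3) by simp_all
  then show ?thesis unfolding is_solution_def by (intro exI[of _ "\<lambda>t. \<Phi> (v t)"]) blast
qed

lemma lin_solution_conjugate:
  assumes \<Phi>: "bounded_linear \<Phi>" and \<Psi>: "bounded_linear \<Psi>" and inv: "\<And>x. \<Psi> (\<Phi> x) = x"
    and conj: "\<And>t h. \<Phi> (frechet_derivative (force m e) (at (q t)) h)
       = frechet_derivative (force m' e') (at (q' t)) (\<Phi> h)"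
  shows "lin_solution m e q Y \<longleftrightarrow> lin_solution m' e' q' (\<lambda>t. map_prod \<Phi> \<Phi> (Y t))"
proof
  have P: "bounded_linear (map_prod \<Phi> \<Phi>)" and Q: "bounded_linear (map_prod \<Psi> \<Psi>)"
    using bounded_linear_map_prod \<Phi> \<Psi> by blast+
  show "lin_solution m' e' q' (\<lambda>t. map_prod \<Phi> \<Phi> (Y t))" if "lin_solution m e q Y"
    unfolding lin_solution_def
  proof
    fix t
    from that have "(Y has_vector_derivative (snd (Y t), frechet_derivative (force m e) (at (q t)) (fst (Y t))))
        (at t)" unfolding lin_solution_def ..
    from bounded_linear.has_vector_derivative[OF P this]
    show "((\<lambda>t. map_prod \<Phi> \<Phi> (Y t)) has_vector_derivative (snd (map_prod \<Phi> \<Phi> (Y t)),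
        frechet_derivative (force m' e') (at (q' t)) (fst (map_prod \<Phi> \<Phi> (Y t))))) (at t)"
      by (simp add: map_prod_def case_prod_beta' conj)
  qed
  show "lin_solution m e q Y" if "lin_solution m' e' q' (\<lambda>t. map_prod \<Phi> \<Phi> (Y t))"
    unfolding lin_solution_def
  proof
    fix t
    from that have "((\<lambda>t. map_prod \<Phi> \<Phi> (Y t)) has_vector_derivative (snd (map_prod \<Phi> \<Phi> (Y t)),
        frechet_derivative (force m' e') (at (q' t)) (fst (map_prod \<Phi> \<Phi> (Y t))))) (at t)"
      unfolding lin_solution_def ..
    from bounded_linear.has_vector_derivative[OF Q this]
    show "(Y has_vector_derivative (snd (Y t), frechet_derivative (force m e) (at (q t)) (fst (Y t)))) (at t)"
      by (simp add: map_prod_def case_prod_beta' inv conj[symmetric])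
  qed
qed

lemma noncollinear_weighted_triangle:
  assumes "\<forall>i. m$i > 0" "\<not> collinear {a$1, a$2, a$3}"
  shows "weighted_triangle m (to_cconf a)"
  using assms noncollinear_Im_nonzero[OF assms(2), of 1 2 3] noncollinear_Im_nonzero[OF assms(2), of 2 3 1]
  unfolding weighted_triangle_def by auto

lemma beta_bounds:
  assumes "weighted_triangle m (to_cconf a)" "\<not> collinear {a$1, a$2, a$3}"
  shows "0 < beta m a" "beta m a \<le> 9" "cmod (twist_constant m (to_cconf a)) < total_mass m"
proof -
  let ?M = "total_mass m" and ?\<sigma> = "cmod (twist_constant m (to_cconf a))"
  have M: "?M > 0" using weighted_triangle_total_mass_pos[OF assms(1)] .
  show pos: "0 < beta m a" by (rule beta_pos[OF assms])
  have "9 * (?M\<^sup>2 - ?\<sigma>\<^sup>2) / ?M\<^sup>2 \<le> 9 * ?M\<^sup>2 / ?M\<^sup>2" by (intro divide_right_mono) simp_all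
  then show "beta m a \<le> 9" unfolding beta_eq_twist_constant[OF assms(1)] using M by simp
  from pos have "?\<sigma>\<^sup>2 < ?M\<^sup>2"
    unfolding beta_eq_twist_constant[OF assms(1)] using M by (simp add: zero_less_divide_iff)
  then show "?\<sigma> < ?M" using M by (simp add: power2_less_imp_less)
qed

lemma rotating_solution_conjugacy:
  assumes tri: "weighted_triangle m A" and tri': "weighted_triangle m' A'"
    and M: "total_mass m' = total_mass m" and centred: "centred m' A' = A'"
    and twist: "cmod (twist_constant m' A') = cmod (twist_constant m A)"
    and nt: "newtonian_along m e A \<kappa>" and nt': "newtonian_along m' e' A' \<kappa>"
    and z: "\<And>t. z t \<noteq> 0" and sol: "is_solution m e (\<lambda>t. of_cconf (\<lambda>i. z t * A i))"
  shows "is_solution m' e' (\<lambda>t. of_cconf (\<lambda>i. z t * A' i))"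
    and "\<exists>P. linear P \<and> bij P \<and> (\<forall>Y. lin_solution m e (\<lambda>t. of_cconf (\<lambda>i. z t * A i)) Y
           \<longleftrightarrow> lin_solution m' e' (\<lambda>t. of_cconf (\<lambda>i. z t * A' i)) (\<lambda>t. P (Y t)))"
proof -
  obtain \<Phi> where "bounded_linear \<Phi>" and conf: "\<And>z. \<Phi> (of_cconf (\<lambda>i. z * A i)) = of_cconf (\<lambda>i. z * A' i)"
    and force: "\<And>z. z \<noteq> 0 \<Longrightarrow> \<Phi> (force m e (of_cconf (\<lambda>i. z * A i))) = force m' e' (of_cconf (\<lambda>i. z * A' i))"
    using similarity_transfer[OF tri _ M centred nt nt'] tri' unfolding weighted_triangle_def by blast
  show "is_solution m' e' (\<lambda>t. of_cconf (\<lambda>i. z t * A' i))"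
    using is_solution_linear_image[OF \<open>bounded_linear \<Phi>\<close> sol] by (simp add: conf force z)
  obtain \<Phi> \<Psi> where \<Phi>: "bounded_linear \<Phi>" "bounded_linear \<Psi>" "\<And>x. \<Psi> (\<Phi> x) = x" "\<And>x. \<Phi> (\<Psi> x) = x"
    and lin: "\<And>z h. z \<noteq> 0 \<Longrightarrow> \<Phi> (frechet_derivative (force m e) (at (of_cconf (\<lambda>i. z * A i))) h)
       = frechet_derivative (force m' e') (at (of_cconf (\<lambda>i. z * A' i))) (\<Phi> h)"
    using linearization_conjugacy[OF tri tri' M twist nt nt'] by blast
  have "bij (map_prod \<Phi> \<Phi>)" using \<Phi>(3,4) by (intro o_bij[of "map_prod \<Psi> \<Psi>"]) auto
  then show "\<exists>P. linear P \<and> bij P \<and> (\<forall>Y. lin_solution m e (\<lambda>t. of_cconf (\<lambda>i. z t * A i)) Y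
           \<longleftrightarrow> lin_solution m' e' (\<lambda>t. of_cconf (\<lambda>i. z t * A' i)) (\<lambda>t. P (Y t)))"
    using bounded_linear_map_prod[OF \<Phi>(1) \<Phi>(1)] lin_solution_conjugate[OF \<Phi>(1,2,3) lin[OF z]]
    by (intro exI[of _ "map_prod \<Phi> \<Phi>"]) (auto dest: bounded_linear.linear)
qed

theorem theorem1p1:
  fixes m e :: "real^3" and a :: conf and r th :: "real \<Rightarrow> real" and ecc :: real
  assumes mpos: "\<forall>i. m$i > 0"
    and delta_pos: "\<forall>i j. i \<noteq> j \<longrightarrow> delta m e i j > 0"
    and cc: "central_config m e a"
    and noncol: "\<not> collinear {a$1, a$2, a$3}"
    and rpos: "\<forall>t. r t > 0"
    and kep: "kepler_orbit (\<lambda>t. vector [r t * cos (th t), r t * sin (th t)]) ecc"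
    and ecc: "0 \<le> ecc" "ecc < 1"
    and sol: "is_solution m e (\<lambda>t. \<chi> i. r t *\<^sub>R rot (th t) (a$i))"
  shows "0 \<le> beta m a \<and> beta m a \<le> 9 \<and>
    (\<exists>m' :: real^3. \<exists>a' :: conf. \<exists>P :: real \<Rightarrow> conf \<times> conf \<Rightarrow> conf \<times> conf.
       (\<forall>i. m'$i > 0) \<and> equilateral a' \<and> beta m' a' = beta m a \<and>
       is_solution m' 0 (\<lambda>t. \<chi> i. r t *\<^sub>R rot (th t) (a'$i)) \<and>
       (\<forall>t. linear (P t) \<and> bij (P t)) \<and>
       (\<forall>T. (\<forall>t. vector [r (t + T) * cos (th (t + T)), r (t + T) * sin (th (t + T))]
                  = (vector [r t * cos (th t), r t * sin (th t)] :: real^2))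
            \<longrightarrow> (\<forall>t. P (t + T) = P t)) \<and>
       (\<forall>Y. lin_solution m e (\<lambda>t. \<chi> i. r t *\<^sub>R rot (th t) (a$i)) Y \<longleftrightarrow>
            lin_solution m' 0 (\<lambda>t. \<chi> i. r t *\<^sub>R rot (th t) (a'$i)) (\<lambda>t. P t (Y t))))"
proof -
  define A where "A = to_cconf a"
  have tri: "weighted_triangle m A" unfolding A_def by (rule noncollinear_weighted_triangle[OF mpos noncol])
  obtain \<kappa> where "\<kappa> > 0" and nt: "newtonian_along m e A \<kappa>"
    using central_config_newtonian[OF mpos delta_pos cc noncol] unfolding A_def .
  note bounds = beta_bounds[OF tri[unfolded A_def] noncol, folded A_def]
  obtain m' a' where tri': "weighted_triangle m' (to_cconf a')" and equi: "equilateral a'"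
    and M: "total_mass m' = total_mass m" and centred: "centred m' (to_cconf a') = to_cconf a'"
    and twist: "cmod (twist_constant m' (to_cconf a')) = cmod (twist_constant m A)"
    and nt': "newtonian_along m' 0 (to_cconf a') \<kappa>"
    using equilateral_partner[OF weighted_triangle_total_mass_pos[OF tri] _ bounds(3) \<open>\<kappa> > 0\<close>] by auto
  have "beta m' a' = beta m a"
    using beta_eq_twist_constant[OF tri'] beta_eq_twist_constant[OF tri[unfolded A_def]] M twist
    unfolding A_def by simp
  define z where "z t = of_real (r t) * cis (th t)" for t
  have "z t \<noteq> 0" for t unfolding z_def using rpos by (simp add: less_imp_neq[symmetric])
  have q: "(\<lambda>t. \<chi> i. r t *\<^sub>R rot (th t) (b$i)) = (\<lambda>t. of_cconf (\<lambda>i. z t * to_cconf b i))" for b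
    unfolding z_def by (simp add: rotating_conf)
  note conj = rotating_solution_conjugacy[OF tri tri' M centred twist nt nt' \<open>\<And>t. z t \<noteq> 0\<close>
      sol[unfolded q, folded A_def]]
  obtain P where "linear P" "bij P" and "\<forall>Y. lin_solution m e (\<lambda>t. of_cconf (\<lambda>i. z t * A i)) Y
      \<longleftrightarrow> lin_solution m' 0 (\<lambda>t. of_cconf (\<lambda>i. z t * to_cconf a' i)) (\<lambda>t. P (Y t))"
    using conj(2) by blast
  then show ?thesis
    using bounds \<open>beta m' a' = beta m a\<close> tri' equi conj(1) unfolding q A_def weighted_triangle_def
    by (intro conjI exI[of _ m'] exI[of _ a'] exI[of _ "\<lambda>t. P"]) auto
qed

end
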